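(* Let $\mathcal X,\mathcal Y$ be Polish spaces, $c:\mathcal X\times\mathcal Y\to\mathbb R$ measurable with $|c|\le1$, $\varepsilon>0$, $\mu\in\mathcal P(\mathcal X)$, $\nu\in\mathcal P(\mathcal Y)$, and $\psi_0\in L^{\exp}_\varepsilon(\nu)$. Let $\phi=(\psi_0)^{(c,\varepsilon)}_\nu$ and $\psi=\phi^{(c,\varepsilon)}_\mu$, and define the measure $\tilde\nu$ on $\mathcal Y$ by \[ \frac{d\tilde\nu}{d\nu}(y)=\int_{\mathcal X}\exp_\varepsilon(\phi(x)+\psi_0(y)-c(x,y))\,d\mu(x). \] Then $\tilde\nu$ is a probability measure on $\mathcal Y$; the pair $(\phi,\psi)$ maximizes $D_{\mu,\tilde\nu}$ over $L^{\exp}_\varepsilon(\mu)\times L^{\exp}_\varepsilon(\tilde\nu)$ (i.e. is a pair of dual optimizers for $\mu,\tilde\nu$); and \[ \mathrm{OT}_{c,\varepsilon}(\mu,\tilde\nu)=\int\phi\,d\mu+\int\psi\,d\tilde\nu=\max_{\varphi\in\mathcal F_{c,\varepsilon}}\int_{\mathcal X}\varphi\,d\mu+\int_{\mathcal Y}\varphi^{(c,\varepsilon)}_\mu\,d\tilde\nu . \]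
   Context: $\exp_\varepsilon(t)=\exp(t/\varepsilon)$. $L^{\exp}_\varepsilon(\mu)$ is the set of measurable $\phi:\mathcal X\to[-\infty,\infty)$ with $0<\int\exp_\varepsilon(\phi)\,d\mu<\infty$ (analogously on $\mathcal Y$). $(\psi_0)^{(c,\varepsilon)}_\nu(x)=-\varepsilon\log\int\exp_\varepsilon(\psi_0(y)-c(x,y))\,d\nu(y)$ and $\phi^{(c,\varepsilon)}_\mu(y)=-\varepsilon\log\int\exp_\varepsilon(\phi(x)-c(x,y))\,d\mu(x)$. $D_{\mu,\nu}(\phi,\psi)=\int\phi\,d\mu+\int\psi\,d\nu-\varepsilon\int\exp_\varepsilon(\phi(x)+\psi(y)-c(x,y))\,d(\mu\otimes\nu)(x,y)+\varepsilon$. $\mathrm{OT}_{c,\varepsilon}(\mu,\nu)=\inf_{\pi\in\Pi(\mu,\nu)}\int c\,d\pi+\varepsilon\,\mathrm{KL}(\pi\mid\mu\otimes\nu)$. $\mathcal F_{c,\varepsilon}=\bigcup_{\xi\in\mathcal P(\mathcal Y)}\{\varphi:\mathcal X\to\mathbb R\mid\exists\,\psi':\mathcal Y\to\mathbb R\text{ measurable},\ \varphi=\psi'^{(c,\varepsilon)}_\xi,\ \|\varphi\|_\infty,\|\psi'\|_\infty\le3/2\}$. *)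

theory Defs
  imports "HOL-Probability.Probability"
begin

text \<open>exp_eps(t) = exp(t/eps), extended to [-infinity, infinity) with exp_eps(-infinity) = 0
  (the value at +infinity is irrelevant: functions in L^exp never take it).\<close>
definition exp_eps :: "real \<Rightarrow> ereal \<Rightarrow> ennreal" where
  "exp_eps \<epsilon> t = (case t of ereal r \<Rightarrow> ennreal (exp (r / \<epsilon>)) | PInfty \<Rightarrow> \<infinity> | MInfty \<Rightarrow> 0)"

definition Lexp :: "real \<Rightarrow> 'a measure \<Rightarrow> ('a \<Rightarrow> ereal) set" where
  "Lexp \<epsilon> M = {f. f \<in> borel_measurable M \<and> (\<forall>x\<in>space M. f x \<noteq> \<infinity>)
       \<and> 0 < (\<integral>\<^sup>+ x. exp_eps \<epsilon> (f x) \<partial>M) \<and> (\<integral>\<^sup>+ x. exp_eps \<epsilon> (f x) \<partial>M) < \<infinity>}"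

definition eint :: "'a measure \<Rightarrow> ('a \<Rightarrow> ereal) \<Rightarrow> ereal" where
  "eint M f = enn2ereal (\<integral>\<^sup>+ x. e2ennreal (f x) \<partial>M) - enn2ereal (\<integral>\<^sup>+ x. e2ennreal (- f x) \<partial>M)"

definition ctransX :: "real \<Rightarrow> ('x \<Rightarrow> 'y \<Rightarrow> real) \<Rightarrow> 'y measure \<Rightarrow> ('y \<Rightarrow> ereal) \<Rightarrow> 'x \<Rightarrow> real" where
  "ctransX \<epsilon> c \<nu> \<psi> x = - \<epsilon> * ln (enn2real (\<integral>\<^sup>+ y. exp_eps \<epsilon> (\<psi> y - ereal (c x y)) \<partial>\<nu>))"

definition ctransY :: "real \<Rightarrow> ('x \<Rightarrow> 'y \<Rightarrow> real) \<Rightarrow> 'x measure \<Rightarrow> ('x \<Rightarrow> ereal) \<Rightarrow> 'y \<Rightarrow> real" where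
  "ctransY \<epsilon> c \<mu> \<phi> y = - \<epsilon> * ln (enn2real (\<integral>\<^sup>+ x. exp_eps \<epsilon> (\<phi> x - ereal (c x y)) \<partial>\<mu>))"

definition Dual :: "real \<Rightarrow> ('x \<Rightarrow> 'y \<Rightarrow> real) \<Rightarrow> 'x measure \<Rightarrow> 'y measure
    \<Rightarrow> ('x \<Rightarrow> ereal) \<Rightarrow> ('y \<Rightarrow> ereal) \<Rightarrow> ereal" where
  "Dual \<epsilon> c \<mu> \<nu> \<phi> \<psi> = eint \<mu> \<phi> + eint \<nu> \<psi>
     - ereal \<epsilon> * enn2ereal (\<integral>\<^sup>+ z. exp_eps \<epsilon> (\<phi> (fst z) + \<psi> (snd z) - ereal (c (fst z) (snd z))) \<partial>(\<mu> \<Otimes>\<^sub>M \<nu>))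
     + ereal \<epsilon>"

definition couplings :: "'x measure \<Rightarrow> 'y measure \<Rightarrow> ('x \<times> 'y) measure set" where
  "couplings \<mu> \<nu> = {\<pi>. sets \<pi> = sets (\<mu> \<Otimes>\<^sub>M \<nu>) \<and> prob_space \<pi>
      \<and> distr \<pi> \<mu> fst = \<mu> \<and> distr \<pi> \<nu> snd = \<nu>}"

definition KLdiv :: "'a measure \<Rightarrow> 'a measure \<Rightarrow> ereal" where
  "KLdiv \<pi> \<rho> = (if absolutely_continuous \<rho> \<pi>
      then eint \<pi> (\<lambda>z. ereal (ln (enn2real (RN_deriv \<rho> \<pi> z)))) else \<infinity>)"

definition OT :: "real \<Rightarrow> ('x \<Rightarrow> 'y \<Rightarrow> real) \<Rightarrow> 'x measure \<Rightarrow> 'y measure \<Rightarrow> ereal" where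
  "OT \<epsilon> c \<mu> \<nu> = (INF \<pi> \<in> couplings \<mu> \<nu>.
      ereal (\<integral> z. c (fst z) (snd z) \<partial>\<pi>) + ereal \<epsilon> * KLdiv \<pi> (\<mu> \<Otimes>\<^sub>M \<nu>))"

definition Fce :: "real \<Rightarrow> ('x \<Rightarrow> 'y::topological_space \<Rightarrow> real) \<Rightarrow> ('x \<Rightarrow> real) set" where
  "Fce \<epsilon> c = {\<phi>. \<exists>\<xi> \<psi>'. prob_space \<xi> \<and> sets \<xi> = sets (borel :: 'y measure)
      \<and> \<psi>' \<in> borel_measurable (borel :: 'y measure)
      \<and> \<phi> = ctransX \<epsilon> c \<xi> (\<lambda>y. ereal (\<psi>' y))
      \<and> (\<forall>x. \<bar>\<phi> x\<bar> \<le> 3/2) \<and> (\<forall>y. \<bar>\<psi>' y\<bar> \<le> 3/2)}"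

end

theory Submission
  imports Defs
begin

text \<open>
  The reweighted marginal \<open>\<nu>'\<close> is exactly what makes the
  Gibbs density \<open>g = exp ((\<phi> \<oplus> \<psi> - c) / \<epsilon>)\<close> integrate to 1 in \<open>y\<close> against \<open>\<nu>'\<close> (the
  normalisation of \<open>\<phi>\<close> as a c-transform of \<open>\<psi>\<^sub>0\<close>) and in \<open>x\<close> against \<open>\<mu>\<close> (the normalisation
  of \<open>\<psi>\<close>). So \<open>(\<phi>, \<psi>)\<close> solves the Schroedinger system for \<open>\<mu>\<close> and \<open>\<nu>'\<close>, and
  \<open>g \<cdot> (\<mu> \<Otimes> \<nu>')\<close> is a coupling. For every coupling \<open>\<pi>\<close>, Gibbs' inequality
  \<open>\<integral> ln g d\<pi> \<le> KL(\<pi> | \<mu> \<Otimes> \<nu>')\<close> gives \<open>\<integral> c d\<pi> + \<epsilon> KL \<ge> \<integral> \<phi> + \<integral> \<psi>\<close>, with equality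
  for the Gibbs coupling; for every pair of potentials, \<open>\<epsilon> exp (t / \<epsilon>) \<ge> \<epsilon> + t\<close> integrated
  against the Gibbs coupling bounds the dual functional by the same value. Finally, c-transforms
  for \<open>|c| \<le> 1\<close> stay within 1 of a constant, and the constants belonging to \<open>\<phi>\<close> and \<open>\<psi>\<close>
  almost cancel, so one shift by a constant moves both potentials into \<open>[-3/2, 3/2]\<close>.
\<close>

section \<open>The exponential \<open>exp_eps\<close> and extended integrals\<close>

lemma ennreal_exp_add: "ennreal (exp (a + b)) = ennreal (exp a) * ennreal (exp b)"
  by (simp add: ennreal_mult[symmetric] exp_add)

lemma exp_eps_ereal [simp]: "exp_eps \<epsilon> (ereal r) = ennreal (exp (r / \<epsilon>))"
  by (simp add: exp_eps_def)

lemma exp_eps_diff_ereal: "exp_eps \<epsilon> (t - ereal r) = exp_eps \<epsilon> t * ennreal (exp (- r / \<epsilon>))"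
proof (cases t)
  case (real a)
  then show ?thesis
    by (simp add: ennreal_mult'[symmetric] exp_add[symmetric] diff_divide_distrib)
qed (auto simp: exp_eps_def ennreal_top_mult)

lemma exp_eps_add_ereal: "exp_eps \<epsilon> (ereal a + t) = ennreal (exp (a / \<epsilon>)) * exp_eps \<epsilon> t"
proof (cases t)
  case (real b)
  then show ?thesis
    by (simp add: ennreal_mult'[symmetric] exp_add[symmetric] add_divide_distrib)
qed (auto simp: exp_eps_def ennreal_mult_top)

lemma exp_eps_add_diff_ereal:
  "exp_eps \<epsilon> (ereal a + t - ereal r) = ennreal (exp (a / \<epsilon>)) * exp_eps \<epsilon> (t - ereal r)"
  by (simp only: exp_eps_diff_ereal exp_eps_add_ereal mult.assoc)

lemma exp_eps_add_diff_ereal':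
  "exp_eps \<epsilon> (ereal a + t - ereal r) = exp_eps \<epsilon> t * ennreal (exp ((a - r) / \<epsilon>))"
proof -
  have "exp_eps \<epsilon> (ereal a + t - ereal r)
      = ennreal (exp (a / \<epsilon>)) * (exp_eps \<epsilon> t * ennreal (exp (- r / \<epsilon>)))"
    by (subst exp_eps_add_diff_ereal) (simp only: exp_eps_diff_ereal)
  also have "\<dots> = exp_eps \<epsilon> t * (ennreal (exp (a / \<epsilon>)) * ennreal (exp (- r / \<epsilon>)))"
    by (rule mult.left_commute)
  finally show ?thesis
    by (simp add: ennreal_exp_add[symmetric] diff_divide_distrib)
qed

lemma measurable_exp_eps [measurable]:
  assumes [measurable]: "f \<in> borel_measurable M"
  shows "(\<lambda>x. exp_eps \<epsilon> (f x)) \<in> borel_measurable M"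
proof -
  have "(\<lambda>x. exp_eps \<epsilon> (f x)) = (\<lambda>x. if f x = \<infinity> then \<infinity> else if f x = -\<infinity> then 0
            else ennreal (exp (real_of_ereal (f x) / \<epsilon>)))"
    by (auto simp: exp_eps_def split: ereal.split)
  also have "\<dots> \<in> borel_measurable M"
    by measurable
  finally show ?thesis .
qed

lemma e2ennreal_le_exp_eps:
  assumes "\<epsilon> > 0"
  shows "e2ennreal t \<le> ennreal \<epsilon> * exp_eps \<epsilon> t"
proof (cases t)
  case (real r)
  have "r / \<epsilon> + 1 \<le> exp (r / \<epsilon>)"
    using exp_ge_add_one_self[of "r / \<epsilon>"] by linarith
  then have "r \<le> \<epsilon> * exp (r / \<epsilon>)"
    using assms by (simp add: field_simps)
  then show ?thesis
    using real assms by (simp add: ennreal_mult'[symmetric] ennreal_leI)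
qed (use assms in \<open>auto simp: exp_eps_def e2ennreal_neg ennreal_mult_top\<close>)

lemma eint_cong_AE:
  assumes "AE x in M. f x = g x"
  shows "eint M f = eint M g"
proof -
  have "(\<integral>\<^sup>+ x. e2ennreal (f x) \<partial>M) = (\<integral>\<^sup>+ x. e2ennreal (g x) \<partial>M)"
    "(\<integral>\<^sup>+ x. e2ennreal (- f x) \<partial>M) = (\<integral>\<^sup>+ x. e2ennreal (- g x) \<partial>M)"
    using assms by (auto intro!: nn_integral_cong_AE elim: eventually_mono)
  then show ?thesis
    by (simp add: eint_def)
qed

lemma eint_ereal:
  fixes f :: "'a \<Rightarrow> real"
  assumes f: "integrable M f"
  shows "eint M (\<lambda>x. ereal (f x)) = ereal (\<integral>x. f x \<partial>M)"
proof -
  have norm_finite: "(\<integral>\<^sup>+ x. ennreal (norm (f x)) \<partial>M) < \<infinity>"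
    using f by (simp add: integrable_iff_bounded)
  have "(\<integral>\<^sup>+ x. ennreal (f x) \<partial>M) < \<infinity>" "(\<integral>\<^sup>+ x. ennreal (- f x) \<partial>M) < \<infinity>"
    by (rule le_less_trans[OF nn_integral_mono norm_finite], simp add: ennreal_leI)+
  then obtain p n where "(\<integral>\<^sup>+ x. ennreal (f x) \<partial>M) = ennreal p" "0 \<le> p"
      "(\<integral>\<^sup>+ x. ennreal (- f x) \<partial>M) = ennreal n" "0 \<le> n"
    by (metis ennreal_cases less_irrefl top.extremum_strict ennreal_enn2real enn2real_nonneg)
  with real_lebesgue_integral_def[OF f] show ?thesis
    by (simp add: eint_def)
qed

lemma integral_le_eint_AE:
  fixes l L :: "'a \<Rightarrow> real"
  assumes L: "integrable M L" and "l \<in> borel_measurable M" and ae: "AE x in M. L x \<le> l x"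
  shows "ereal (\<integral>x. L x \<partial>M) \<le> eint M (\<lambda>x. ereal (l x))"
proof -
  have "(\<integral>\<^sup>+ x. ennreal (L x) \<partial>M) \<le> (\<integral>\<^sup>+ x. ennreal (l x) \<partial>M)"
    "(\<integral>\<^sup>+ x. ennreal (- l x) \<partial>M) \<le> (\<integral>\<^sup>+ x. ennreal (- L x) \<partial>M)"
    using ae by (auto intro!: nn_integral_mono_AE ennreal_leI elim!: eventually_mono)
  then show ?thesis
    unfolding eint_ereal[OF L, symmetric] eint_def
    by (intro ereal_minus_mono) (simp_all add: less_eq_ennreal.rep_eq)
qed

lemma Lexp_measurable: "f \<in> Lexp \<epsilon> M \<Longrightarrow> f \<in> borel_measurable M"
  by (simp add: Lexp_def)

lemma nn_integral_pos_part_Lexp_finite: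
  assumes "\<epsilon> > 0" and f: "f \<in> Lexp \<epsilon> M"
  shows "(\<integral>\<^sup>+ x. e2ennreal (f x) \<partial>M) < \<infinity>"
proof -
  have [measurable]: "f \<in> borel_measurable M"
    using f by (rule Lexp_measurable)
  have "(\<integral>\<^sup>+ x. e2ennreal (f x) \<partial>M) \<le> (\<integral>\<^sup>+ x. ennreal \<epsilon> * exp_eps \<epsilon> (f x) \<partial>M)"
    by (intro nn_integral_mono e2ennreal_le_exp_eps assms)
  also have "\<dots> = ennreal \<epsilon> * (\<integral>\<^sup>+ x. exp_eps \<epsilon> (f x) \<partial>M)"
    by (rule nn_integral_cmult) measurable
  also have "\<dots> < \<infinity>"
    using f by (simp add: Lexp_def ennreal_mult_less_top)
  finally show ?thesis .
qed

lemma eint_Lexp_neq_PInfty: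
  assumes "\<epsilon> > 0" and "f \<in> Lexp \<epsilon> M"
  shows "eint M f \<noteq> \<infinity>"
proof -
  have "enn2ereal (\<integral>\<^sup>+ x. e2ennreal (f x) \<partial>M) \<noteq> \<infinity>"
    using nn_integral_pos_part_Lexp_finite[OF assms] by simp
  moreover have "0 \<le> enn2ereal (\<integral>\<^sup>+ x. e2ennreal (- f x) \<partial>M)"
    by simp
  ultimately show ?thesis
    unfolding eint_def
    by (cases "enn2ereal (\<integral>\<^sup>+ x. e2ennreal (f x) \<partial>M)";
        cases "enn2ereal (\<integral>\<^sup>+ x. e2ennreal (- f x) \<partial>M)") auto
qed

lemma Lexp_eint_cases:
  assumes "\<epsilon> > 0" and f: "f \<in> Lexp \<epsilon> M"
  obtains "eint M f = -\<infinity>"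
    | u where "integrable M u" and "AE x in M. f x = ereal (u x)"
proof (cases "(\<integral>\<^sup>+ x. e2ennreal (- f x) \<partial>M) = \<infinity>")
  case True
  then show ?thesis
    using that(1) nn_integral_pos_part_Lexp_finite[OF assms]
    by (cases "\<integral>\<^sup>+ x. e2ennreal (f x) \<partial>M") (auto simp: eint_def)
next
  case False
  have [measurable]: "f \<in> borel_measurable M"
    using f by (rule Lexp_measurable)
  define u where "u x = real_of_ereal (f x)" for x
  have pos: "(\<integral>\<^sup>+ x. e2ennreal (f x) \<partial>M) \<noteq> \<infinity>"
    using nn_integral_pos_part_Lexp_finite[OF assms] by simp
  have "AE x in M. e2ennreal (f x) \<noteq> \<infinity>" "AE x in M. e2ennreal (- f x) \<noteq> \<infinity>"
    using nn_integral_PInf_AE[OF _ pos] nn_integral_PInf_AE[OF _ False] by simp_all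
  then have ae: "AE x in M. f x = ereal (u x)"
  proof eventually_elim
    case (elim x)
    then show ?case
      by (cases "f x") (auto simp: u_def)
  qed
  have "(\<integral>\<^sup>+ x. ennreal (norm (u x)) \<partial>M) = (\<integral>\<^sup>+ x. ennreal (u x) + ennreal (- u x) \<partial>M)"
    by (intro nn_integral_cong) (auto simp: abs_real_def ennreal_neg)
  also have "\<dots> = (\<integral>\<^sup>+ x. e2ennreal (f x) + e2ennreal (- f x) \<partial>M)"
    using ae by (intro nn_integral_cong_AE) (auto elim!: eventually_mono simp: e2ennreal_ereal)
  also have "\<dots> = (\<integral>\<^sup>+ x. e2ennreal (f x) \<partial>M) + (\<integral>\<^sup>+ x. e2ennreal (- f x) \<partial>M)"
    by (rule nn_integral_add) measurable
  also have "\<dots> < \<infinity>"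
    using pos False by (simp add: less_top)
  moreover have "u \<in> borel_measurable M"
    unfolding u_def by measurable
  ultimately have "integrable M u"
    by (simp add: integrable_iff_bounded)
  with ae show ?thesis
    using that(2) by blast
qed

lemma Lexp_of_bounded:
  assumes "\<epsilon> > 0" and "prob_space M" and [measurable]: "f \<in> borel_measurable M"
    and "bounded (range f)"
  shows "(\<lambda>x. ereal (f x)) \<in> Lexp \<epsilon> M"
proof -
  interpret prob_space M by fact
  obtain B where B: "\<And>x. \<bar>f x\<bar> \<le> B"
    using \<open>bounded (range f)\<close> by (auto simp: bounded_real)
  have bounds: "- B / \<epsilon> \<le> f x / \<epsilon>" "f x / \<epsilon> \<le> B / \<epsilon>" for x
    by (rule divide_right_mono, use B[of x] \<open>\<epsilon> > 0\<close> in \<open>auto simp: abs_le_iff\<close>)+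
  have "0 < ennreal (exp (- B / \<epsilon>))"
    by simp
  also have "\<dots> = (\<integral>\<^sup>+ x. ennreal (exp (- B / \<epsilon>)) \<partial>M)"
    by (simp add: emeasure_space_1)
  also have "\<dots> \<le> (\<integral>\<^sup>+ x. ennreal (exp (f x / \<epsilon>)) \<partial>M)"
    by (intro nn_integral_mono ennreal_leI) (use bounds in auto)
  finally have pos: "0 < (\<integral>\<^sup>+ x. ennreal (exp (f x / \<epsilon>)) \<partial>M)" .
  have "(\<integral>\<^sup>+ x. ennreal (exp (f x / \<epsilon>)) \<partial>M) \<le> (\<integral>\<^sup>+ x. ennreal (exp (B / \<epsilon>)) \<partial>M)"
    by (intro nn_integral_mono ennreal_leI) (use bounds in auto)
  also have "\<dots> < \<infinity>"
    by (simp add: emeasure_space_1)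
  finally show ?thesis
    using pos by (simp add: Lexp_def)
qed

section \<open>Entropic c-transforms\<close>

lemma ln_nn_integral_diff_le:
  fixes F G :: "'a \<Rightarrow> ennreal"
  assumes [measurable]: "G \<in> borel_measurable M"
    and pos: "0 < integral\<^sup>N M G" and fin: "integral\<^sup>N M G < \<infinity>"
    and upper: "\<And>x. x \<in> space M \<Longrightarrow> F x \<le> ennreal (exp \<delta>) * G x"
    and lower: "\<And>x. x \<in> space M \<Longrightarrow> ennreal (exp (- \<delta>)) * G x \<le> F x"
  shows "0 < integral\<^sup>N M F" and "integral\<^sup>N M F < \<infinity>"
    and "\<bar>ln (enn2real (integral\<^sup>N M F)) - ln (enn2real (integral\<^sup>N M G))\<bar> \<le> \<delta>"
proof -
  obtain g where g: "integral\<^sup>N M G = ennreal g" "0 < g"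
    using pos fin by (cases "integral\<^sup>N M G") auto
  have "integral\<^sup>N M F \<le> (\<integral>\<^sup>+ x. ennreal (exp \<delta>) * G x \<partial>M)"
    by (intro nn_integral_mono upper)
  also have "\<dots> = ennreal (exp \<delta> * g)"
    by (simp add: nn_integral_cmult g ennreal_mult')
  finally have F_upper: "integral\<^sup>N M F \<le> ennreal (exp \<delta> * g)" .
  have "ennreal (exp (- \<delta>) * g) = (\<integral>\<^sup>+ x. ennreal (exp (- \<delta>)) * G x \<partial>M)"
    by (simp add: nn_integral_cmult g ennreal_mult')
  also have "\<dots> \<le> integral\<^sup>N M F"
    by (intro nn_integral_mono lower)
  finally have F_lower: "ennreal (exp (- \<delta>) * g) \<le> integral\<^sup>N M F" .
  obtain f where f: "integral\<^sup>N M F = ennreal f" "0 \<le> f"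
    using F_upper by (cases "integral\<^sup>N M F") (auto simp: top_unique)
  have f_upper: "f \<le> exp \<delta> * g" and f_lower: "exp (- \<delta>) * g \<le> f"
    using F_upper F_lower g f by (simp_all add: ennreal_le_iff)
  have "0 < f"
    using f_lower g(2) by (meson exp_gt_zero less_le_trans mult_pos_pos)
  then show "0 < integral\<^sup>N M F" "integral\<^sup>N M F < \<infinity>"
    using f by simp_all
  have "ln f \<le> ln (exp \<delta> * g)"
    using f_upper \<open>0 < f\<close> g(2) by simp
  also have "\<dots> = \<delta> + ln g"
    using g(2) by (simp add: ln_mult)
  finally have "ln f \<le> \<delta> + ln g" .
  have "- \<delta> + ln g = ln (exp (- \<delta>) * g)"
    using g(2) by (simp add: ln_mult)
  also have "\<dots> \<le> ln f"
    using f_lower \<open>0 < f\<close> g(2) by simp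
  finally have "- \<delta> + ln g \<le> ln f" .
  with \<open>ln f \<le> \<delta> + ln g\<close> show "\<bar>ln (enn2real (integral\<^sup>N M F)) - ln (enn2real (integral\<^sup>N M G))\<bar> \<le> \<delta>"
    using f g by simp
qed

lemma ln_mean_exp_dist_le:
  assumes "\<epsilon> > 0" and "prob_space M" and [measurable]: "f \<in> borel_measurable M"
    and near: "\<And>x. x \<in> space M \<Longrightarrow> \<bar>f x - a\<bar> \<le> 1"
  shows "\<bar>\<epsilon> * ln (enn2real (\<integral>\<^sup>+ x. exp_eps \<epsilon> (ereal (f x)) \<partial>M)) - a\<bar> \<le> 1"
proof -
  interpret prob_space M by fact
  have bounds: "f x / \<epsilon> \<le> 1 / \<epsilon> + a / \<epsilon>" "- (1 / \<epsilon>) + a / \<epsilon> \<le> f x / \<epsilon>"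
    if "x \<in> space M" for x
    using divide_right_mono[of "f x" "1 + a" \<epsilon>] divide_right_mono[of "a - 1" "f x" \<epsilon>] near[OF that] \<open>\<epsilon> > 0\<close>
    by (auto simp: abs_le_iff add_divide_distrib diff_divide_distrib)
  have "\<bar>ln (enn2real (\<integral>\<^sup>+ x. exp_eps \<epsilon> (ereal (f x)) \<partial>M))
         - ln (enn2real (\<integral>\<^sup>+ x. ennreal (exp (a / \<epsilon>)) \<partial>M))\<bar> \<le> 1 / \<epsilon>"
    by (rule ln_nn_integral_diff_le(3))
      (use bounds in \<open>simp_all add: emeasure_space_1 ennreal_exp_add[symmetric]\<close>)
  then have "\<bar>ln (enn2real (\<integral>\<^sup>+ x. exp_eps \<epsilon> (ereal (f x)) \<partial>M)) - a / \<epsilon>\<bar> \<le> 1 / \<epsilon>"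
    by (simp add: emeasure_space_1)
  from mult_left_mono[OF this, of \<epsilon>] have "\<epsilon> * \<bar>ln (enn2real (\<integral>\<^sup>+ x. exp_eps \<epsilon> (ereal (f x)) \<partial>M)) - a / \<epsilon>\<bar> \<le> 1"
    using \<open>\<epsilon> > 0\<close> by simp
  moreover have "\<epsilon> * ln (enn2real (\<integral>\<^sup>+ x. exp_eps \<epsilon> (ereal (f x)) \<partial>M)) - a
      = \<epsilon> * (ln (enn2real (\<integral>\<^sup>+ x. exp_eps \<epsilon> (ereal (f x)) \<partial>M)) - a / \<epsilon>)"
    using \<open>\<epsilon> > 0\<close> by (simp add: right_diff_distrib)
  ultimately show ?thesis
    using \<open>\<epsilon> > 0\<close> by (simp add: abs_mult)
qed

lemma exp_eps_diff_cost_bounds: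
  assumes "\<epsilon> > 0" and "\<bar>r\<bar> \<le> 1"
  shows "exp_eps \<epsilon> (t - ereal r) \<le> ennreal (exp (1 / \<epsilon>)) * exp_eps \<epsilon> t"
    and "ennreal (exp (- (1 / \<epsilon>))) * exp_eps \<epsilon> t \<le> exp_eps \<epsilon> (t - ereal r)"
proof -
  have "- r / \<epsilon> \<le> 1 / \<epsilon>" "- 1 / \<epsilon> \<le> - r / \<epsilon>"
    by (rule divide_right_mono, use assms in \<open>auto simp: abs_le_iff\<close>)+
  then show "exp_eps \<epsilon> (t - ereal r) \<le> ennreal (exp (1 / \<epsilon>)) * exp_eps \<epsilon> t"
    and "ennreal (exp (- (1 / \<epsilon>))) * exp_eps \<epsilon> t \<le> exp_eps \<epsilon> (t - ereal r)"
    unfolding exp_eps_diff_ereal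
    by (auto simp: mult.commute intro!: mult_left_mono ennreal_leI)
qed

lemma nn_integral_exp_eps_diff_cost:
  assumes "\<epsilon> > 0" and f: "f \<in> Lexp \<epsilon> M" and k: "\<And>y. \<bar>k y\<bar> \<le> 1"
  shows "0 < (\<integral>\<^sup>+ y. exp_eps \<epsilon> (f y - ereal (k y)) \<partial>M)"
    and "(\<integral>\<^sup>+ y. exp_eps \<epsilon> (f y - ereal (k y)) \<partial>M) < \<infinity>"
    and "\<bar>ln (enn2real (\<integral>\<^sup>+ y. exp_eps \<epsilon> (f y - ereal (k y)) \<partial>M))
          - ln (enn2real (\<integral>\<^sup>+ y. exp_eps \<epsilon> (f y) \<partial>M))\<bar> \<le> 1 / \<epsilon>"
proof -
  have [measurable]: "f \<in> borel_measurable M"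
    using f by (rule Lexp_measurable)
  note close = ln_nn_integral_diff_le[where G="\<lambda>y. exp_eps \<epsilon> (f y)",
      OF _ _ _ exp_eps_diff_cost_bounds[OF \<open>\<epsilon> > 0\<close> k]]
  show "0 < (\<integral>\<^sup>+ y. exp_eps \<epsilon> (f y - ereal (k y)) \<partial>M)"
    and "(\<integral>\<^sup>+ y. exp_eps \<epsilon> (f y - ereal (k y)) \<partial>M) < \<infinity>"
    and "\<bar>ln (enn2real (\<integral>\<^sup>+ y. exp_eps \<epsilon> (f y - ereal (k y)) \<partial>M))
          - ln (enn2real (\<integral>\<^sup>+ y. exp_eps \<epsilon> (f y) \<partial>M))\<bar> \<le> 1 / \<epsilon>"
    using close f by (auto simp: Lexp_def)
qed

lemma ctransX_eqI:
  assumes "\<epsilon> > 0" and "(\<integral>\<^sup>+ y. exp_eps \<epsilon> (f y - ereal (k x y)) \<partial>M) = ennreal (exp (- v / \<epsilon>))"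
  shows "ctransX \<epsilon> k M f x = v"
  using assms by (simp add: ctransX_def)

lemma ctransX_exp:
  assumes "\<epsilon> > 0" and "f \<in> Lexp \<epsilon> M" and "\<And>y. \<bar>k x y\<bar> \<le> 1"
  shows "ennreal (exp (- ctransX \<epsilon> k M f x / \<epsilon>)) = (\<integral>\<^sup>+ y. exp_eps \<epsilon> (f y - ereal (k x y)) \<partial>M)"
proof -
  define I where "I = (\<integral>\<^sup>+ y. exp_eps \<epsilon> (f y - ereal (k x y)) \<partial>M)"
  obtain i where i: "I = ennreal i" "0 < i"
    using nn_integral_exp_eps_diff_cost(1,2)[where k="k x", OF assms] unfolding I_def[symmetric]
    by (cases I) auto
  then show ?thesis
    using \<open>\<epsilon> > 0\<close> by (simp add: ctransX_def I_def[symmetric])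
qed

lemma ctransX_dist_le:
  assumes "\<epsilon> > 0" and "f \<in> Lexp \<epsilon> M" and "\<And>y. \<bar>k x y\<bar> \<le> 1"
  shows "\<bar>ctransX \<epsilon> k M f x + \<epsilon> * ln (enn2real (\<integral>\<^sup>+ y. exp_eps \<epsilon> (f y) \<partial>M))\<bar> \<le> 1"
proof -
  have "\<epsilon> * \<bar>ln (enn2real (\<integral>\<^sup>+ y. exp_eps \<epsilon> (f y - ereal (k x y)) \<partial>M))
          - ln (enn2real (\<integral>\<^sup>+ y. exp_eps \<epsilon> (f y) \<partial>M))\<bar> \<le> 1"
    using mult_left_mono[OF nn_integral_exp_eps_diff_cost(3)[where k="k x", OF assms], of \<epsilon>] \<open>\<epsilon> > 0\<close>
    by simp
  moreover have "ctransX \<epsilon> k M f x + \<epsilon> * ln (enn2real (\<integral>\<^sup>+ y. exp_eps \<epsilon> (f y) \<partial>M))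
      = - (\<epsilon> * (ln (enn2real (\<integral>\<^sup>+ y. exp_eps \<epsilon> (f y - ereal (k x y)) \<partial>M))
          - ln (enn2real (\<integral>\<^sup>+ y. exp_eps \<epsilon> (f y) \<partial>M))))"
    by (simp add: ctransX_def algebra_simps)
  ultimately show ?thesis
    using \<open>\<epsilon> > 0\<close> by (simp add: abs_mult)
qed

lemma ctransX_bounded:
  assumes "\<epsilon> > 0" and "f \<in> Lexp \<epsilon> M" and "\<And>x y. \<bar>k x y\<bar> \<le> 1"
  shows "bounded (range (ctransX \<epsilon> k M f))"
  unfolding bounded_real
proof (intro exI ballI)
  fix t assume "t \<in> range (ctransX \<epsilon> k M f)"
  then obtain x where "t = ctransX \<epsilon> k M f x"
    by auto
  then show "\<bar>t\<bar> \<le> 1 + \<bar>\<epsilon> * ln (enn2real (\<integral>\<^sup>+ y. exp_eps \<epsilon> (f y) \<partial>M))\<bar>"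
    using ctransX_dist_le[where k=k and x=x, OF assms(1,2) assms(3)] by linarith
qed

lemma measurable_ctransX:
  assumes [measurable]: "(\<lambda>(a, y). k a y) \<in> borel_measurable (A \<Otimes>\<^sub>M M)" "f \<in> borel_measurable M"
    and "sigma_finite_measure M"
  shows "ctransX \<epsilon> k M f \<in> borel_measurable A"
proof -
  interpret sigma_finite_measure M by fact
  have "(\<lambda>a. \<integral>\<^sup>+ y. exp_eps \<epsilon> (f y - ereal (k a y)) \<partial>M) \<in> borel_measurable A"
    by measurable
  then show ?thesis
    unfolding ctransX_def[abs_def] by measurable
qed

lemma ctransX_normalized:
  assumes "\<epsilon> > 0" and "f \<in> Lexp \<epsilon> M" and "\<And>y. \<bar>k x y\<bar> \<le> 1"
    and [measurable]: "(\<lambda>y. k x y) \<in> borel_measurable M"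
  shows "(\<integral>\<^sup>+ y. exp_eps \<epsilon> (ereal (ctransX \<epsilon> k M f x) + f y - ereal (k x y)) \<partial>M) = 1"
proof -
  have [measurable]: "f \<in> borel_measurable M"
    using assms(2) by (rule Lexp_measurable)
  have "(\<integral>\<^sup>+ y. exp_eps \<epsilon> (ereal (ctransX \<epsilon> k M f x) + f y - ereal (k x y)) \<partial>M)
      = ennreal (exp (ctransX \<epsilon> k M f x / \<epsilon>)) * (\<integral>\<^sup>+ y. exp_eps \<epsilon> (f y - ereal (k x y)) \<partial>M)"
    unfolding exp_eps_add_diff_ereal by (rule nn_integral_cmult) measurable
  also have "\<dots> = 1"
    unfolding ctransX_exp[where k=k and x=x, OF assms(1-3), symmetric] ennreal_exp_add[symmetric] by simp
  finally show ?thesis .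
qed

lemma ctransY_eq_ctransX: "ctransY \<epsilon> c \<mu> g = ctransX \<epsilon> (\<lambda>y x. c x y) \<mu> g"
  by (simp add: ctransX_def[abs_def] ctransY_def[abs_def])

lemma ctransY_normalized:
  assumes "\<epsilon> > 0" and "g \<in> Lexp \<epsilon> \<mu>" and "\<And>x. \<bar>c x y\<bar> \<le> 1"
    and "(\<lambda>x. c x y) \<in> borel_measurable \<mu>"
  shows "(\<integral>\<^sup>+ x. exp_eps \<epsilon> (g x + ereal (ctransY \<epsilon> c \<mu> g y) - ereal (c x y)) \<partial>\<mu>) = 1"
  using ctransX_normalized[OF assms(1,2), of "\<lambda>y x. c x y" y] assms(3,4)
  by (simp add: ctransY_eq_ctransX add.commute)

section \<open>Couplings and relative entropy\<close>

lemma (in finite_measure) integrable_bounded_range: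
  fixes f :: "'a \<Rightarrow> real"
  assumes "f \<in> borel_measurable M" and "bounded (range f)"
  shows "integrable M f"
proof -
  obtain B where "\<And>x. \<bar>f x\<bar> \<le> B"
    using \<open>bounded (range f)\<close> by (auto simp: bounded_real)
  then show ?thesis
    using assms(1) by (intro integrable_const_bound[where B=B]) auto
qed

lemma couplings_sets: "\<pi> \<in> couplings \<mu> \<nu> \<Longrightarrow> sets \<pi> = sets (\<mu> \<Otimes>\<^sub>M \<nu>)"
  by (simp add: couplings_def)

lemma couplings_prob_space: "\<pi> \<in> couplings \<mu> \<nu> \<Longrightarrow> prob_space \<pi>"
  by (simp add: couplings_def)

lemma couplingsI:
  assumes sets: "sets \<pi> = sets (\<mu> \<Otimes>\<^sub>M \<nu>)" and "prob_space \<mu>"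
    and marginal_fst: "\<And>A. A \<in> sets \<mu> \<Longrightarrow> emeasure \<pi> (A \<times> space \<nu>) = emeasure \<mu> A"
    and marginal_snd: "\<And>B. B \<in> sets \<nu> \<Longrightarrow> emeasure \<pi> (space \<mu> \<times> B) = emeasure \<nu> B"
  shows "\<pi> \<in> couplings \<mu> \<nu>"
proof -
  have space: "space \<pi> = space \<mu> \<times> space \<nu>"
    using sets_eq_imp_space_eq[OF sets] by (simp add: space_pair_measure)
  have fst: "fst \<in> measurable \<pi> \<mu>" and snd: "snd \<in> measurable \<pi> \<nu>"
    by (simp_all add: measurable_cong_sets[OF sets refl])
  have "distr \<pi> \<mu> fst = \<mu>"
  proof (rule measure_eqI)
    fix A assume "A \<in> sets (distr \<pi> \<mu> fst)"
    then have A: "A \<in> sets \<mu>"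
      by simp
    then have "fst -` A \<inter> space \<pi> = A \<times> space \<nu>"
      using sets.sets_into_space[OF A] by (auto simp: space)
    then show "emeasure (distr \<pi> \<mu> fst) A = emeasure \<mu> A"
      using A fst by (simp add: emeasure_distr marginal_fst)
  qed simp
  moreover have "distr \<pi> \<nu> snd = \<nu>"
  proof (rule measure_eqI)
    fix B assume "B \<in> sets (distr \<pi> \<nu> snd)"
    then have B: "B \<in> sets \<nu>"
      by simp
    then have "snd -` B \<inter> space \<pi> = space \<mu> \<times> B"
      using sets.sets_into_space[OF B] by (auto simp: space)
    then show "emeasure (distr \<pi> \<nu> snd) B = emeasure \<nu> B"
      using B snd by (simp add: emeasure_distr marginal_snd)
  qed simp
  moreover have "prob_space \<pi>"
  proof
    show "emeasure \<pi> (space \<pi>) = 1"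
      using marginal_fst[OF sets.top] prob_space.emeasure_space_1[OF \<open>prob_space \<mu>\<close>]
      by (simp add: space)
  qed
  ultimately show ?thesis
    using sets by (simp add: couplings_def)
qed

lemma couplings_integral_fst:
  fixes f :: "'x \<Rightarrow> real"
  assumes \<pi>: "\<pi> \<in> couplings \<mu> \<nu>" and f: "integrable \<mu> f"
  shows "integrable \<pi> (\<lambda>z. f (fst z))" and "(\<integral>z. f (fst z) \<partial>\<pi>) = (\<integral>x. f x \<partial>\<mu>)"
proof -
  have fst: "fst \<in> measurable \<pi> \<mu>"
    by (simp add: measurable_cong_sets[OF couplings_sets[OF \<pi>] refl])
  have marginal: "distr \<pi> \<mu> fst = \<mu>"
    using \<pi> by (simp add: couplings_def)
  have f_meas: "f \<in> borel_measurable \<mu>"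
    using f by simp
  show "integrable \<pi> (\<lambda>z. f (fst z))"
    using integrable_distr_eq[OF fst f_meas] f marginal by simp
  show "(\<integral>z. f (fst z) \<partial>\<pi>) = (\<integral>x. f x \<partial>\<mu>)"
    using integral_distr[OF fst f_meas] marginal by simp
qed

lemma couplings_integral_snd:
  fixes f :: "'y \<Rightarrow> real"
  assumes \<pi>: "\<pi> \<in> couplings \<mu> \<nu>" and f: "integrable \<nu> f"
  shows "integrable \<pi> (\<lambda>z. f (snd z))" and "(\<integral>z. f (snd z) \<partial>\<pi>) = (\<integral>y. f y \<partial>\<nu>)"
proof -
  have snd: "snd \<in> measurable \<pi> \<nu>"
    by (simp add: measurable_cong_sets[OF couplings_sets[OF \<pi>] refl])
  have marginal: "distr \<pi> \<nu> snd = \<nu>"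
    using \<pi> by (simp add: couplings_def)
  have f_meas: "f \<in> borel_measurable \<nu>"
    using f by simp
  show "integrable \<pi> (\<lambda>z. f (snd z))"
    using integrable_distr_eq[OF snd f_meas] f marginal by simp
  show "(\<integral>z. f (snd z) \<partial>\<pi>) = (\<integral>y. f y \<partial>\<nu>)"
    using integral_distr[OF snd f_meas] marginal by simp
qed

lemma KLdiv_density:
  assumes "sigma_finite_measure \<rho>" and [measurable]: "g \<in> borel_measurable \<rho>"
    and "\<And>z. 0 < g z" and int: "integrable (density \<rho> (\<lambda>z. ennreal (g z))) (\<lambda>z. ln (g z))"
  shows "KLdiv (density \<rho> (\<lambda>z. ennreal (g z))) \<rho> = ereal (\<integral>z. ln (g z) \<partial>density \<rho> (\<lambda>z. ennreal (g z)))"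
proof -
  let ?\<pi> = "density \<rho> (\<lambda>z. ennreal (g z))"
  have "AE z in \<rho>. ennreal (g z) = RN_deriv \<rho> ?\<pi> z"
    by (rule sigma_finite_measure.RN_deriv_unique[OF assms(1)]) simp_all
  then have "AE z in \<rho>. RN_deriv \<rho> ?\<pi> z = ennreal (g z)"
    by (auto elim: eventually_mono)
  then have "AE z in ?\<pi>. ereal (ln (enn2real (RN_deriv \<rho> ?\<pi> z))) = ereal (ln (g z))"
    using \<open>\<And>z. 0 < g z\<close> by (auto simp: AE_density less_imp_le elim!: eventually_mono)
  then have "eint ?\<pi> (\<lambda>z. ereal (ln (enn2real (RN_deriv \<rho> ?\<pi> z)))) = eint ?\<pi> (\<lambda>z. ereal (ln (g z)))"
    by (rule eint_cong_AE)
  moreover have "absolutely_continuous \<rho> ?\<pi>"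
    by (rule absolutely_continuousI_density) measurable
  ultimately show ?thesis
    by (simp add: KLdiv_def eint_ereal[OF int])
qed

lemma nn_integral_div_RN_deriv_le:
  assumes "sigma_finite_measure \<rho>" and ac: "absolutely_continuous \<rho> \<pi>" and sets: "sets \<pi> = sets \<rho>"
    and [measurable]: "g \<in> borel_measurable \<rho>" and g_nonneg: "\<And>z. 0 \<le> g z"
  shows "(\<integral>\<^sup>+ z. ennreal (g z / enn2real (RN_deriv \<rho> \<pi> z)) \<partial>\<pi>) \<le> (\<integral>\<^sup>+ z. ennreal (g z) \<partial>\<rho>)"
proof -
  let ?f = "RN_deriv \<rho> \<pi>"
  have "(\<integral>\<^sup>+ z. ennreal (g z / enn2real (?f z)) \<partial>\<pi>)
      = (\<integral>\<^sup>+ z. ?f z * ennreal (g z / enn2real (?f z)) \<partial>\<rho>)"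
    by (subst sigma_finite_measure.density_RN_deriv[OF assms(1) ac sets, symmetric])
      (rule nn_integral_density; measurable)
  also have "\<dots> \<le> (\<integral>\<^sup>+ z. ennreal (g z) \<partial>\<rho>)"
  proof (rule nn_integral_mono)
    fix z
    show "?f z * ennreal (g z / enn2real (?f z)) \<le> ennreal (g z)"
      using g_nonneg[of z]
      by (cases "?f z") (auto simp: ennreal_mult[symmetric] ennreal_top_mult)
  qed
  finally show ?thesis .
qed

lemma AE_RN_deriv_pos_finite:
  assumes \<rho>: "sigma_finite_measure \<rho>" and "sigma_finite_measure \<pi>"
    and ac: "absolutely_continuous \<rho> \<pi>" and sets: "sets \<pi> = sets \<rho>"
  shows "AE z in \<pi>. 0 < RN_deriv \<rho> \<pi> z \<and> RN_deriv \<rho> \<pi> z \<noteq> \<infinity>"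
proof -
  have "AE z in \<rho>. RN_deriv \<rho> \<pi> z \<noteq> \<infinity>"
    by (rule sigma_finite_measure.RN_deriv_finite[OF assms])
  then have "AE z in density \<rho> (RN_deriv \<rho> \<pi>). 0 < RN_deriv \<rho> \<pi> z \<and> RN_deriv \<rho> \<pi> z \<noteq> \<infinity>"
    by (auto simp: AE_density elim: eventually_mono)
  then show ?thesis
    by (simp only: sigma_finite_measure.density_RN_deriv[OF \<rho> ac sets])
qed

lemma
  assumes \<rho>: "sigma_finite_measure \<rho>" and \<pi>: "prob_space \<pi>"
    and ac: "absolutely_continuous \<rho> \<pi>" and sets: "sets \<pi> = sets \<rho>"
    and [measurable]: "g \<in> borel_measurable \<rho>" and g_nonneg: "\<And>z. 0 \<le> g z"
    and mass: "(\<integral>\<^sup>+ z. ennreal (g z) \<partial>\<rho>) \<le> 1"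
  shows integrable_div_RN_deriv: "integrable \<pi> (\<lambda>z. g z / enn2real (RN_deriv \<rho> \<pi> z))"
    and integral_div_RN_deriv_le: "(\<integral>z. g z / enn2real (RN_deriv \<rho> \<pi> z) \<partial>\<pi>) \<le> 1"
proof -
  let ?q = "\<lambda>z. g z / enn2real (RN_deriv \<rho> \<pi> z)"
  have q_meas: "?q \<in> borel_measurable \<pi>"
    by (simp add: measurable_cong_sets[OF sets refl])
  have q_nonneg: "0 \<le> ?q z" for z
    using g_nonneg[of z] by simp
  have q_mass: "(\<integral>\<^sup>+ z. ennreal (?q z) \<partial>\<pi>) \<le> 1"
    using nn_integral_div_RN_deriv_le[OF \<rho> ac sets, of g] g_nonneg mass by (auto intro: order_trans)
  show "integrable \<pi> ?q"
    by (rule integrableI_nonneg[OF q_meas]) (use q_nonneg q_mass in \<open>auto intro: le_less_trans\<close>)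
  show "(\<integral>z. ?q z \<partial>\<pi>) \<le> 1"
    using integral_eq_nn_integral[OF q_meas] q_nonneg q_mass by (simp add: enn2real_leI)
qed

text \<open>For \<open>q = g / (d\<pi>/d\<rho>)\<close> one has \<open>ln q \<le> q - 1\<close> and \<open>\<integral> q d\<pi> \<le> \<integral> g d\<rho> \<le> 1\<close>.\<close>

lemma KLdiv_ge_integral_ln:
  assumes \<rho>: "sigma_finite_measure \<rho>" and \<pi>: "prob_space \<pi>" and sets: "sets \<pi> = sets \<rho>"
    and g_meas [measurable]: "g \<in> borel_measurable \<rho>" and g_pos: "\<And>z. 0 < g z"
    and mass: "(\<integral>\<^sup>+ z. ennreal (g z) \<partial>\<rho>) \<le> 1"
    and int: "integrable \<pi> (\<lambda>z. ln (g z))"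
  shows "ereal (\<integral>z. ln (g z) \<partial>\<pi>) \<le> KLdiv \<pi> \<rho>"
proof (cases "absolutely_continuous \<rho> \<pi>")
  case False
  then show ?thesis
    by (simp add: KLdiv_def)
next
  case ac: True
  interpret \<pi>: prob_space \<pi> by fact
  let ?f = "RN_deriv \<rho> \<pi>"
  define q where "q z = g z / enn2real (?f z)" for z
  have g_nonneg: "0 \<le> g z" for z
    using g_pos[of z] by simp
  have q_int: "integrable \<pi> q" and q_le_1: "(\<integral>z. q z \<partial>\<pi>) \<le> 1"
    unfolding q_def
    using integrable_div_RN_deriv[OF \<rho> \<pi> ac sets g_meas g_nonneg mass]
      integral_div_RN_deriv_le[OF \<rho> \<pi> ac sets g_meas g_nonneg mass] .
  have "AE z in \<pi>. ln (g z) + 1 - q z \<le> ln (enn2real (?f z))"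
    using AE_RN_deriv_pos_finite[OF \<rho> \<pi>.sigma_finite_measure ac sets]
  proof eventually_elim
    case (elim z)
    then have "0 < enn2real (?f z)"
      by (cases "?f z") auto
    then have "ln (q z) = ln (g z) - ln (enn2real (?f z))" and "0 < q z"
      using g_pos[of z] by (simp_all add: q_def ln_div)
    with ln_le_minus_one[OF \<open>0 < q z\<close>] show ?case
      by simp
  qed
  then have "ereal (\<integral>z. ln (g z) + 1 - q z \<partial>\<pi>) \<le> KLdiv \<pi> \<rho>"
    using ac by (auto simp: KLdiv_def measurable_cong_sets[OF sets refl] intro!: integral_le_eint_AE int q_int)
  moreover have "(\<integral>z. ln (g z) + 1 - q z \<partial>\<pi>) = (\<integral>z. ln (g z) \<partial>\<pi>) + 1 - (\<integral>z. q z \<partial>\<pi>)"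
    using int q_int by (simp add: \<pi>.prob_space)
  ultimately show ?thesis
    using q_le_1 by (simp add: order_trans[rotated])
qed

section \<open>The dual functional\<close>

lemma Dual_cong_AE:
  assumes "pair_sigma_finite \<mu> \<nu>"
    and [measurable]: "\<phi> \<in> borel_measurable \<mu>" "\<phi>' \<in> borel_measurable \<mu>"
      "\<psi> \<in> borel_measurable \<nu>" "\<psi>' \<in> borel_measurable \<nu>"
    and \<phi>_ae: "AE x in \<mu>. \<phi> x = \<phi>' x" and \<psi>_ae: "AE y in \<nu>. \<psi> y = \<psi>' y"
  shows "Dual \<epsilon> c \<mu> \<nu> \<phi> \<psi> = Dual \<epsilon> c \<mu> \<nu> \<phi>' \<psi>'"
proof -
  interpret pair_sigma_finite \<mu> \<nu> by fact
  have "AE x in \<mu>. AE y in \<nu>. \<phi> x = \<phi>' x \<and> \<psi> y = \<psi>' y"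
    using \<phi>_ae by eventually_elim (use \<psi>_ae in \<open>auto elim: eventually_mono\<close>)
  then have "AE z in \<mu> \<Otimes>\<^sub>M \<nu>. \<phi> (fst z) = \<phi>' (fst z) \<and> \<psi> (snd z) = \<psi>' (snd z)"
    by (intro AE_pair_measure) simp_all
  then have "(\<integral>\<^sup>+ z. exp_eps \<epsilon> (\<phi> (fst z) + \<psi> (snd z) - ereal (c (fst z) (snd z))) \<partial>(\<mu> \<Otimes>\<^sub>M \<nu>))
      = (\<integral>\<^sup>+ z. exp_eps \<epsilon> (\<phi>' (fst z) + \<psi>' (snd z) - ereal (c (fst z) (snd z))) \<partial>(\<mu> \<Otimes>\<^sub>M \<nu>))"
    by (intro nn_integral_cong_AE) (auto elim: eventually_mono)
  then show ?thesis
    by (simp add: Dual_def eint_cong_AE[OF \<phi>_ae] eint_cong_AE[OF \<psi>_ae])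
qed

lemma Dual_eq_MInfty:
  assumes "\<epsilon> > 0" and "eint \<mu> \<phi> \<noteq> \<infinity>" and "eint \<nu> \<psi> \<noteq> \<infinity>"
    and "eint \<mu> \<phi> = -\<infinity> \<or> eint \<nu> \<psi> = -\<infinity>"
  shows "Dual \<epsilon> c \<mu> \<nu> \<phi> \<psi> = -\<infinity>"
proof -
  define X where "X = (\<integral>\<^sup>+ z. exp_eps \<epsilon> (\<phi> (fst z) + \<psi> (snd z) - ereal (c (fst z) (snd z))) \<partial>(\<mu> \<Otimes>\<^sub>M \<nu>))"
  have sum: "eint \<mu> \<phi> + eint \<nu> \<psi> = -\<infinity>"
    using assms(2-4) by (cases "eint \<mu> \<phi>"; cases "eint \<nu> \<psi>") auto
  have "0 \<le> ereal \<epsilon> * enn2ereal X"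
    using \<open>\<epsilon> > 0\<close> by simp
  then show ?thesis
    unfolding Dual_def X_def[symmetric] sum by (cases "ereal \<epsilon> * enn2ereal X") simp_all
qed

lemma Dual_ctransY:
  assumes "pair_prob_space \<mu> \<nu>" and "\<epsilon> > 0"
    and [measurable]: "(\<lambda>(x, y). c x y) \<in> borel_measurable (\<mu> \<Otimes>\<^sub>M \<nu>)" and c: "\<And>x y. \<bar>c x y\<bar> \<le> 1"
    and [measurable]: "\<phi> \<in> borel_measurable \<mu>" and "bounded (range \<phi>)"
  defines "\<psi> \<equiv> ctransY \<epsilon> c \<mu> (\<lambda>x. ereal (\<phi> x))"
  shows "\<psi> \<in> borel_measurable \<nu>" and "bounded (range \<psi>)"
    and "Dual \<epsilon> c \<mu> \<nu> (\<lambda>x. ereal (\<phi> x)) (\<lambda>y. ereal (\<psi> y))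
      = ereal (\<integral>x. \<phi> x \<partial>\<mu>) + ereal (\<integral>y. \<psi> y \<partial>\<nu>)"
proof -
  interpret pair_prob_space \<mu> \<nu> by fact
  have \<phi>_Lexp: "(\<lambda>x. ereal (\<phi> x)) \<in> Lexp \<epsilon> \<mu>"
    using Lexp_of_bounded[OF \<open>\<epsilon> > 0\<close> M1.prob_space_axioms] assms(5,6) .
  have c_swap [measurable]: "(\<lambda>(y, x). c x y) \<in> borel_measurable (\<nu> \<Otimes>\<^sub>M \<mu>)"
    using measurable_pair_swap[OF assms(3)] by simp
  show \<psi>_meas [measurable]: "\<psi> \<in> borel_measurable \<nu>"
    unfolding \<psi>_def ctransY_eq_ctransX
    by (rule measurable_ctransX) (simp_all add: M1.sigma_finite_measure_axioms)
  show \<psi>_bounded: "bounded (range \<psi>)"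
    unfolding \<psi>_def ctransY_eq_ctransX using \<phi>_Lexp c by (intro ctransX_bounded assms(2))
  have "(\<lambda>x. c x y) \<in> borel_measurable \<mu>" if "y \<in> space \<nu>" for y
    using that by measurable
  then have column: "(\<integral>\<^sup>+ x. exp_eps \<epsilon> (ereal (\<phi> x) + ereal (\<psi> y) - ereal (c x y)) \<partial>\<mu>) = 1"
    if "y \<in> space \<nu>" for y
    using ctransY_normalized[where c=c and y=y, OF \<open>\<epsilon> > 0\<close> \<phi>_Lexp c] that by (simp add: \<psi>_def)
  have "(\<integral>\<^sup>+ z. exp_eps \<epsilon> (ereal (\<phi> (fst z)) + ereal (\<psi> (snd z)) - ereal (c (fst z) (snd z))) \<partial>(\<mu> \<Otimes>\<^sub>M \<nu>))
      = (\<integral>\<^sup>+ y. (\<integral>\<^sup>+ x. exp_eps \<epsilon> (ereal (\<phi> x) + ereal (\<psi> y) - ereal (c x y)) \<partial>\<mu>) \<partial>\<nu>)"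
    by (subst nn_integral_snd[symmetric]) simp_all
  also have "\<dots> = (\<integral>\<^sup>+ y. 1 \<partial>\<nu>)"
    by (intro nn_integral_cong column)
  also have "\<dots> = 1"
    by (simp add: M2.emeasure_space_1)
  finally show "Dual \<epsilon> c \<mu> \<nu> (\<lambda>x. ereal (\<phi> x)) (\<lambda>y. ereal (\<psi> y))
      = ereal (\<integral>x. \<phi> x \<partial>\<mu>) + ereal (\<integral>y. \<psi> y \<partial>\<nu>)"
    using M1.integrable_bounded_range[OF assms(5,6)] M2.integrable_bounded_range[OF \<psi>_meas \<psi>_bounded]
      enn2ereal_ennreal[of 1]
    by (simp add: Dual_def eint_ereal)
qed

section \<open>Solutions of the Schroedinger system\<close>

locale schroedinger_system = pair_prob_space \<mu> \<nu>
  for \<mu> :: "'x measure" and \<nu> :: "'y measure" +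
  fixes \<epsilon> :: real and c :: "'x \<Rightarrow> 'y \<Rightarrow> real" and \<phi> :: "'x \<Rightarrow> real" and \<psi> :: "'y \<Rightarrow> real"
  assumes eps_pos: "\<epsilon> > 0"
    and cost_measurable [measurable]: "(\<lambda>(x, y). c x y) \<in> borel_measurable (\<mu> \<Otimes>\<^sub>M \<nu>)"
    and cost_bounded: "\<And>x y. \<bar>c x y\<bar> \<le> 1"
    and \<phi>_measurable [measurable]: "\<phi> \<in> borel_measurable \<mu>"
    and \<psi>_measurable [measurable]: "\<psi> \<in> borel_measurable \<nu>"
    and \<phi>_bounded: "bounded (range \<phi>)"
    and \<psi>_bounded: "bounded (range \<psi>)"
    and row_normalized:
      "\<And>x. x \<in> space \<mu> \<Longrightarrow> (\<integral>\<^sup>+ y. ennreal (exp ((\<phi> x + \<psi> y - c x y) / \<epsilon>)) \<partial>\<nu>) = 1"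
    and column_normalized:
      "\<And>y. y \<in> space \<nu> \<Longrightarrow> (\<integral>\<^sup>+ x. ennreal (exp ((\<phi> x + \<psi> y - c x y) / \<epsilon>)) \<partial>\<mu>) = 1"
begin

lemma integrable_\<phi>: "integrable \<mu> \<phi>"
  by (rule M1.integrable_bounded_range[OF \<phi>_measurable \<phi>_bounded])

lemma integrable_\<psi>: "integrable \<nu> \<psi>"
  by (rule M2.integrable_bounded_range[OF \<psi>_measurable \<psi>_bounded])

lemma Lexp_potentials:
  "(\<lambda>x. ereal (\<phi> x)) \<in> Lexp \<epsilon> \<mu>" "(\<lambda>y. ereal (\<psi> y)) \<in> Lexp \<epsilon> \<nu>"
  using Lexp_of_bounded[OF eps_pos M1.prob_space_axioms \<phi>_measurable \<phi>_bounded]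
    Lexp_of_bounded[OF eps_pos M2.prob_space_axioms \<psi>_measurable \<psi>_bounded] .

lemma eint_potentials:
  "eint \<mu> (\<lambda>x. ereal (\<phi> x)) + eint \<nu> (\<lambda>y. ereal (\<psi> y)) = ereal ((\<integral>x. \<phi> x \<partial>\<mu>) + (\<integral>y. \<psi> y \<partial>\<nu>))"
  by (simp add: eint_ereal integrable_\<phi> integrable_\<psi>)

definition log_density :: "'x \<times> 'y \<Rightarrow> real" where
  "log_density z = (\<phi> (fst z) + \<psi> (snd z) - c (fst z) (snd z)) / \<epsilon>"

definition optimal_coupling :: "('x \<times> 'y) measure" where
  "optimal_coupling = density (\<mu> \<Otimes>\<^sub>M \<nu>) (\<lambda>z. ennreal (exp (log_density z)))"

lemma measurable_log_density [measurable]: "log_density \<in> borel_measurable (\<mu> \<Otimes>\<^sub>M \<nu>)"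
  unfolding log_density_def[abs_def] by measurable

lemma log_density_bounded: "bounded (range log_density)"
proof -
  obtain B\<phi> B\<psi> where B\<phi>: "\<And>x. \<bar>\<phi> x\<bar> \<le> B\<phi>" and B\<psi>: "\<And>y. \<bar>\<psi> y\<bar> \<le> B\<psi>"
    using \<phi>_bounded \<psi>_bounded by (auto simp: bounded_real)
  have "\<bar>\<phi> x + \<psi> y - c x y\<bar> \<le> B\<phi> + B\<psi> + 1" for x y
    using B\<phi>[of x] B\<psi>[of y] cost_bounded[of x y] by linarith
  then have "\<bar>log_density z\<bar> \<le> (B\<phi> + B\<psi> + 1) / \<epsilon>" for z
    using eps_pos by (simp add: log_density_def abs_div divide_right_mono)
  then show ?thesis
    by (auto simp: bounded_real)
qed

lemma sets_optimal_coupling [measurable_cong]: "sets optimal_coupling = sets (\<mu> \<Otimes>\<^sub>M \<nu>)"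
  by (simp add: optimal_coupling_def)

lemma emeasure_optimal_coupling:
  "A \<in> sets (\<mu> \<Otimes>\<^sub>M \<nu>) \<Longrightarrow>
    emeasure optimal_coupling A = (\<integral>\<^sup>+ z. ennreal (exp (log_density z)) * indicator A z \<partial>(\<mu> \<Otimes>\<^sub>M \<nu>))"
  unfolding optimal_coupling_def by (rule emeasure_density) measurable

lemma emeasure_optimal_coupling_fst:
  assumes A [measurable]: "A \<in> sets \<mu>"
  shows "emeasure optimal_coupling (A \<times> space \<nu>) = emeasure \<mu> A"
proof -
  have "emeasure optimal_coupling (A \<times> space \<nu>)
      = (\<integral>\<^sup>+ x. (\<integral>\<^sup>+ y. ennreal (exp (log_density (x, y))) * indicator (A \<times> space \<nu>) (x, y) \<partial>\<nu>) \<partial>\<mu>)"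
    unfolding emeasure_optimal_coupling[OF pair_measureI[OF A sets.top]]
    by (rule M2.nn_integral_fst[symmetric]) measurable
  also have "\<dots> = (\<integral>\<^sup>+ x. indicator A x \<partial>\<mu>)"
  proof (rule nn_integral_cong)
    fix x assume x: "x \<in> space \<mu>"
    have "(\<integral>\<^sup>+ y. ennreal (exp (log_density (x, y))) * indicator (A \<times> space \<nu>) (x, y) \<partial>\<nu>)
        = (\<integral>\<^sup>+ y. ennreal (exp ((\<phi> x + \<psi> y - c x y) / \<epsilon>)) * indicator A x \<partial>\<nu>)"
      by (intro nn_integral_cong) (simp add: log_density_def indicator_def)
    also have "\<dots> = indicator A x"
      using x by (simp add: nn_integral_multc row_normalized)
    finally show "(\<integral>\<^sup>+ y. ennreal (exp (log_density (x, y))) * indicator (A \<times> space \<nu>) (x, y) \<partial>\<nu>)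
        = indicator A x" .
  qed
  finally show ?thesis
    by simp
qed

lemma emeasure_optimal_coupling_snd:
  assumes B [measurable]: "B \<in> sets \<nu>"
  shows "emeasure optimal_coupling (space \<mu> \<times> B) = emeasure \<nu> B"
proof -
  have "emeasure optimal_coupling (space \<mu> \<times> B)
      = (\<integral>\<^sup>+ y. (\<integral>\<^sup>+ x. ennreal (exp (log_density (x, y))) * indicator (space \<mu> \<times> B) (x, y) \<partial>\<mu>) \<partial>\<nu>)"
    unfolding emeasure_optimal_coupling[OF pair_measureI[OF sets.top B]]
    by (rule nn_integral_snd[symmetric]) measurable
  also have "\<dots> = (\<integral>\<^sup>+ y. indicator B y \<partial>\<nu>)"
  proof (rule nn_integral_cong)
    fix y assume y: "y \<in> space \<nu>"
    have "(\<integral>\<^sup>+ x. ennreal (exp (log_density (x, y))) * indicator (space \<mu> \<times> B) (x, y) \<partial>\<mu>)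
        = (\<integral>\<^sup>+ x. ennreal (exp ((\<phi> x + \<psi> y - c x y) / \<epsilon>)) * indicator B y \<partial>\<mu>)"
      by (intro nn_integral_cong) (simp add: log_density_def indicator_def)
    also have "\<dots> = indicator B y"
      using y by (simp add: nn_integral_multc column_normalized)
    finally show "(\<integral>\<^sup>+ x. ennreal (exp (log_density (x, y))) * indicator (space \<mu> \<times> B) (x, y) \<partial>\<mu>)
        = indicator B y" .
  qed
  finally show ?thesis
    by simp
qed

lemma optimal_coupling_in_couplings: "optimal_coupling \<in> couplings \<mu> \<nu>"
  by (rule couplingsI)
    (simp_all add: sets_optimal_coupling M1.prob_space_axioms emeasure_optimal_coupling_fst
      emeasure_optimal_coupling_snd)

lemma nn_integral_exp_log_density: "(\<integral>\<^sup>+ z. ennreal (exp (log_density z)) \<partial>(\<mu> \<Otimes>\<^sub>M \<nu>)) = 1"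
  using prob_space.emeasure_space_1[OF couplings_prob_space[OF optimal_coupling_in_couplings]]
  by (simp add: emeasure_optimal_coupling sets_eq_imp_space_eq[OF sets_optimal_coupling])

lemma
  assumes \<pi>: "\<pi> \<in> couplings \<mu> \<nu>"
  shows integrable_log_density: "integrable \<pi> log_density"
    and integral_log_density:
      "\<epsilon> * (\<integral>z. log_density z \<partial>\<pi>) = (\<integral>x. \<phi> x \<partial>\<mu>) + (\<integral>y. \<psi> y \<partial>\<nu>) - (\<integral>z. c (fst z) (snd z) \<partial>\<pi>)"
proof -
  interpret \<pi>: prob_space \<pi>
    using \<pi> by (rule couplings_prob_space)
  have [measurable_cong]: "sets \<pi> = sets (\<mu> \<Otimes>\<^sub>M \<nu>)"
    using \<pi> by (rule couplings_sets)
  show "integrable \<pi> log_density"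
    using log_density_bounded by (intro \<pi>.integrable_bounded_range) simp_all
  have cost: "integrable \<pi> (\<lambda>z. c (fst z) (snd z))"
    using cost_bounded by (intro \<pi>.integrable_const_bound[where B=1]) simp_all
  note \<phi> = couplings_integral_fst[OF \<pi> integrable_\<phi>] and \<psi> = couplings_integral_snd[OF \<pi> integrable_\<psi>]
  have "\<epsilon> * log_density z = \<phi> (fst z) + \<psi> (snd z) - c (fst z) (snd z)" for z
    using eps_pos by (simp add: log_density_def)
  then have "\<epsilon> * (\<integral>z. log_density z \<partial>\<pi>) = (\<integral>z. \<phi> (fst z) + \<psi> (snd z) - c (fst z) (snd z) \<partial>\<pi>)"
    by (simp flip: integral_mult_right_zero)
  also have "\<dots> = (\<integral>x. \<phi> x \<partial>\<mu>) + (\<integral>y. \<psi> y \<partial>\<nu>) - (\<integral>z. c (fst z) (snd z) \<partial>\<pi>)"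
    using \<phi> \<psi> cost by simp
  finally show "\<epsilon> * (\<integral>z. log_density z \<partial>\<pi>)
      = (\<integral>x. \<phi> x \<partial>\<mu>) + (\<integral>y. \<psi> y \<partial>\<nu>) - (\<integral>z. c (fst z) (snd z) \<partial>\<pi>)" .
qed

lemma KLdiv_optimal_coupling:
  "KLdiv optimal_coupling (\<mu> \<Otimes>\<^sub>M \<nu>) = ereal (\<integral>z. log_density z \<partial>optimal_coupling)"
  using KLdiv_density[of "\<mu> \<Otimes>\<^sub>M \<nu>" "\<lambda>z. exp (log_density z)"]
    integrable_log_density[OF optimal_coupling_in_couplings]
  by (simp add: optimal_coupling_def sigma_finite_measure_axioms)

lemma KLdiv_ge_integral_log_density:
  assumes "\<pi> \<in> couplings \<mu> \<nu>"
  shows "ereal (\<integral>z. log_density z \<partial>\<pi>) \<le> KLdiv \<pi> (\<mu> \<Otimes>\<^sub>M \<nu>)"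
  using KLdiv_ge_integral_ln[of "\<mu> \<Otimes>\<^sub>M \<nu>" \<pi> "\<lambda>z. exp (log_density z)"]
    couplings_prob_space[OF assms] couplings_sets[OF assms] integrable_log_density[OF assms]
  by (simp add: sigma_finite_measure_axioms nn_integral_exp_log_density)

theorem OT_eq_integral_potentials: "OT \<epsilon> c \<mu> \<nu> = ereal ((\<integral>x. \<phi> x \<partial>\<mu>) + (\<integral>y. \<psi> y \<partial>\<nu>))"
proof (rule antisym)
  have cost_plus_entropy: "ereal (\<integral>z. c (fst z) (snd z) \<partial>\<pi>) + ereal \<epsilon> * ereal (\<integral>z. log_density z \<partial>\<pi>)
      = ereal ((\<integral>x. \<phi> x \<partial>\<mu>) + (\<integral>y. \<psi> y \<partial>\<nu>))" if "\<pi> \<in> couplings \<mu> \<nu>" for \<pi>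
    using integral_log_density[OF that] by simp
  show "OT \<epsilon> c \<mu> \<nu> \<le> ereal ((\<integral>x. \<phi> x \<partial>\<mu>) + (\<integral>y. \<psi> y \<partial>\<nu>))"
    unfolding OT_def
    by (rule INF_lower2[OF optimal_coupling_in_couplings])
      (use cost_plus_entropy[OF optimal_coupling_in_couplings] in \<open>simp add: KLdiv_optimal_coupling\<close>)
  show "ereal ((\<integral>x. \<phi> x \<partial>\<mu>) + (\<integral>y. \<psi> y \<partial>\<nu>)) \<le> OT \<epsilon> c \<mu> \<nu>"
    unfolding OT_def
  proof (rule INF_greatest)
    fix \<pi> assume \<pi>: "\<pi> \<in> couplings \<mu> \<nu>"
    have "ereal \<epsilon> * ereal (\<integral>z. log_density z \<partial>\<pi>) \<le> ereal \<epsilon> * KLdiv \<pi> (\<mu> \<Otimes>\<^sub>M \<nu>)"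
      using KLdiv_ge_integral_log_density[OF \<pi>] eps_pos by (intro ereal_mult_left_mono) simp_all
    then show "ereal ((\<integral>x. \<phi> x \<partial>\<mu>) + (\<integral>y. \<psi> y \<partial>\<nu>))
        \<le> ereal (\<integral>z. c (fst z) (snd z) \<partial>\<pi>) + ereal \<epsilon> * KLdiv \<pi> (\<mu> \<Otimes>\<^sub>M \<nu>)"
      unfolding cost_plus_entropy[OF \<pi>, symmetric] by (rule add_left_mono)
  qed
qed

lemma nn_integral_exp_eq_optimal_coupling:
  assumes [measurable]: "u \<in> borel_measurable \<mu>" "v \<in> borel_measurable \<nu>"
  shows "(\<integral>\<^sup>+ z. ennreal (exp ((u (fst z) + v (snd z) - c (fst z) (snd z)) / \<epsilon>)) \<partial>(\<mu> \<Otimes>\<^sub>M \<nu>))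
    = (\<integral>\<^sup>+ z. ennreal (exp (((u (fst z) - \<phi> (fst z)) + (v (snd z) - \<psi> (snd z))) / \<epsilon>)) \<partial>optimal_coupling)"
proof -
  have "exp (log_density z) * exp (((u (fst z) - \<phi> (fst z)) + (v (snd z) - \<psi> (snd z))) / \<epsilon>)
      = exp ((u (fst z) + v (snd z) - c (fst z) (snd z)) / \<epsilon>)" for z
    using eps_pos by (simp add: log_density_def exp_add[symmetric] field_simps)
  then show ?thesis
    unfolding optimal_coupling_def
    by (subst nn_integral_density) (simp_all add: ennreal_mult[symmetric])
qed

lemma
  assumes u: "integrable \<mu> u" and v: "integrable \<nu> v"
  shows integrable_optimal_coupling_diff:
      "integrable optimal_coupling (\<lambda>z. (u (fst z) - \<phi> (fst z)) + (v (snd z) - \<psi> (snd z)))"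
    and integral_optimal_coupling_diff:
      "(\<integral>z. (u (fst z) - \<phi> (fst z)) + (v (snd z) - \<psi> (snd z)) \<partial>optimal_coupling)
        = (\<integral>x. u x \<partial>\<mu>) - (\<integral>x. \<phi> x \<partial>\<mu>) + ((\<integral>y. v y \<partial>\<nu>) - (\<integral>y. \<psi> y \<partial>\<nu>))"
proof -
  note u_\<phi> = Bochner_Integration.integrable_diff[OF u integrable_\<phi>]
    and v_\<psi> = Bochner_Integration.integrable_diff[OF v integrable_\<psi>]
  note fst = couplings_integral_fst[OF optimal_coupling_in_couplings u_\<phi>]
    and snd = couplings_integral_snd[OF optimal_coupling_in_couplings v_\<psi>]
  show "integrable optimal_coupling (\<lambda>z. (u (fst z) - \<phi> (fst z)) + (v (snd z) - \<psi> (snd z)))"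
    using fst(1) snd(1) by simp
  show "(\<integral>z. (u (fst z) - \<phi> (fst z)) + (v (snd z) - \<psi> (snd z)) \<partial>optimal_coupling)
      = (\<integral>x. u x \<partial>\<mu>) - (\<integral>x. \<phi> x \<partial>\<mu>) + ((\<integral>y. v y \<partial>\<nu>) - (\<integral>y. \<psi> y \<partial>\<nu>))"
    using fst snd u v integrable_\<phi> integrable_\<psi> by simp
qed

text \<open>Under the optimal coupling the exponential term of the dual functional becomes
  \<open>\<integral> exp (h / \<epsilon>)\<close> with \<open>h = (u - \<phi>) \<oplus> (v - \<psi>)\<close>, and \<open>\<epsilon> exp (h / \<epsilon>) \<ge> \<epsilon> + h\<close>.\<close>

lemma Dual_le_of_integrable:
  assumes u: "integrable \<mu> u" and v: "integrable \<nu> v"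
  shows "Dual \<epsilon> c \<mu> \<nu> (\<lambda>x. ereal (u x)) (\<lambda>y. ereal (v y)) \<le> ereal ((\<integral>x. \<phi> x \<partial>\<mu>) + (\<integral>y. \<psi> y \<partial>\<nu>))"
proof -
  interpret \<pi>: prob_space optimal_coupling
    by (rule couplings_prob_space[OF optimal_coupling_in_couplings])
  have [measurable]: "u \<in> borel_measurable \<mu>" "v \<in> borel_measurable \<nu>"
    using u v by simp_all
  define h where "h z = (u (fst z) - \<phi> (fst z)) + (v (snd z) - \<psi> (snd z))" for z
  have [measurable]: "h \<in> borel_measurable optimal_coupling"
    unfolding h_def[abs_def] by measurable
  define X where "X = (\<integral>\<^sup>+ z. ennreal (exp (h z / \<epsilon>)) \<partial>optimal_coupling)"
  have Dual: "Dual \<epsilon> c \<mu> \<nu> (\<lambda>x. ereal (u x)) (\<lambda>y. ereal (v y))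
      = ereal ((\<integral>x. u x \<partial>\<mu>) + (\<integral>y. v y \<partial>\<nu>)) - ereal \<epsilon> * enn2ereal X + ereal \<epsilon>"
    by (simp add: Dual_def X_def h_def eint_ereal u v nn_integral_exp_eq_optimal_coupling)
  show ?thesis
  proof (cases "X = \<infinity>")
    case True
    then show ?thesis
      unfolding Dual using eps_pos by simp
  next
    case False
    then obtain x where x: "X = ennreal x" "0 \<le> x"
      by (cases X) auto
    then have exp_h: "integrable optimal_coupling (\<lambda>z. exp (h z / \<epsilon>))"
      "(\<integral>z. exp (h z / \<epsilon>) \<partial>optimal_coupling) = x"
      using nn_integral_eq_integrable[of "\<lambda>z. exp (h z / \<epsilon>)" optimal_coupling x] by (simp_all add: X_def)
    have "h z \<le> \<epsilon> * exp (h z / \<epsilon>) - \<epsilon>" for z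
      using mult_left_mono[OF exp_ge_add_one_self[of "h z / \<epsilon>"], of \<epsilon>] eps_pos
      by (simp add: distrib_left)
    then have "(\<integral>z. h z \<partial>optimal_coupling) \<le> (\<integral>z. \<epsilon> * exp (h z / \<epsilon>) - \<epsilon> \<partial>optimal_coupling)"
      using integrable_optimal_coupling_diff[OF u v] exp_h(1) unfolding h_def by (intro integral_mono) auto
    also have "\<dots> = \<epsilon> * x - \<epsilon>"
      using exp_h by (simp add: \<pi>.prob_space)
    finally show ?thesis
      unfolding Dual x h_def integral_optimal_coupling_diff[OF u v] using x(2) by simp
  qed
qed

theorem Dual_le_integral_potentials:
  assumes "\<phi>' \<in> Lexp \<epsilon> \<mu>" and "\<psi>' \<in> Lexp \<epsilon> \<nu>"
  shows "Dual \<epsilon> c \<mu> \<nu> \<phi>' \<psi>' \<le> ereal ((\<integral>x. \<phi> x \<partial>\<mu>) + (\<integral>y. \<psi> y \<partial>\<nu>))"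
proof -
  have [measurable]: "\<phi>' \<in> borel_measurable \<mu>" "\<psi>' \<in> borel_measurable \<nu>"
    using assms by (simp_all add: Lexp_measurable)
  note finite = eint_Lexp_neq_PInfty[OF eps_pos assms(1)] eint_Lexp_neq_PInfty[OF eps_pos assms(2)]
  from Lexp_eint_cases[OF eps_pos assms(1)] show ?thesis
  proof cases
    case 1
    then show ?thesis
      using Dual_eq_MInfty[OF eps_pos finite] by simp
  next
    case (2 u)
    from Lexp_eint_cases[OF eps_pos assms(2)] show ?thesis
    proof cases
      case 1
      then show ?thesis
        using Dual_eq_MInfty[OF eps_pos finite] by simp
    next
      case (2 v)
      have "Dual \<epsilon> c \<mu> \<nu> \<phi>' \<psi>' = Dual \<epsilon> c \<mu> \<nu> (\<lambda>x. ereal (u x)) (\<lambda>y. ereal (v y))"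
        using \<open>integrable \<mu> u\<close> \<open>integrable \<nu> v\<close> \<open>AE x in \<mu>. \<phi>' x = ereal (u x)\<close> \<open>AE y in \<nu>. \<psi>' y = ereal (v y)\<close>
        by (intro Dual_cong_AE) (simp_all add: pair_sigma_finite_axioms)
      also have "\<dots> \<le> ereal ((\<integral>x. \<phi> x \<partial>\<mu>) + (\<integral>y. \<psi> y \<partial>\<nu>))"
        using \<open>integrable \<mu> u\<close> \<open>integrable \<nu> v\<close> by (rule Dual_le_of_integrable)
      finally show ?thesis .
    qed
  qed
qed

lemma ctransX_shifted_\<psi>:
  assumes "x \<in> space \<mu>"
  shows "ctransX \<epsilon> c \<nu> (\<lambda>y. ereal (\<psi> y + s)) x = \<phi> x - s"
proof (rule ctransX_eqI[OF eps_pos])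
  have [measurable]: "(\<lambda>y. c x y) \<in> borel_measurable \<nu>"
    using assms by measurable
  have "(\<integral>\<^sup>+ y. exp_eps \<epsilon> (ereal (\<psi> y + s) - ereal (c x y)) \<partial>\<nu>)
      = (\<integral>\<^sup>+ y. ennreal (exp ((s - \<phi> x) / \<epsilon>)) * ennreal (exp ((\<phi> x + \<psi> y - c x y) / \<epsilon>)) \<partial>\<nu>)"
    by (intro nn_integral_cong) (simp add: ennreal_exp_add[symmetric] add_divide_distrib[symmetric])
  also have "\<dots> = ennreal (exp (- (\<phi> x - s) / \<epsilon>))"
    using assms by (simp add: nn_integral_cmult row_normalized)
  finally show "(\<integral>\<^sup>+ y. exp_eps \<epsilon> (ereal (\<psi> y + s) - ereal (c x y)) \<partial>\<nu>) = ennreal (exp (- (\<phi> x - s) / \<epsilon>))" .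
qed

lemma ctransY_shifted_\<phi>:
  assumes "y \<in> space \<nu>"
  shows "ctransY \<epsilon> c \<mu> (\<lambda>x. ereal (\<phi> x - s)) y = \<psi> y + s"
  unfolding ctransY_eq_ctransX
proof (rule ctransX_eqI[OF eps_pos])
  have [measurable]: "(\<lambda>x. c x y) \<in> borel_measurable \<mu>"
    using assms by measurable
  have "(\<integral>\<^sup>+ x. exp_eps \<epsilon> (ereal (\<phi> x - s) - ereal (c x y)) \<partial>\<mu>)
      = (\<integral>\<^sup>+ x. ennreal (exp (- (\<psi> y + s) / \<epsilon>)) * ennreal (exp ((\<phi> x + \<psi> y - c x y) / \<epsilon>)) \<partial>\<mu>)"
    by (intro nn_integral_cong) (simp add: ennreal_exp_add[symmetric] add_divide_distrib[symmetric])
  also have "\<dots> = ennreal (exp (- (\<psi> y + s) / \<epsilon>))"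
    using assms by (simp add: nn_integral_cmult column_normalized)
  finally show "(\<integral>\<^sup>+ x. exp_eps \<epsilon> (ereal (\<phi> x - s) - ereal (c x y)) \<partial>\<mu>) = ennreal (exp (- (\<psi> y + s) / \<epsilon>))" .
qed

lemma Dual_potentials_eq:
  "Dual \<epsilon> c \<mu> \<nu> (\<lambda>x. ereal (\<phi> x)) (\<lambda>y. ereal (\<psi> y)) = ereal ((\<integral>x. \<phi> x \<partial>\<mu>) + (\<integral>y. \<psi> y \<partial>\<nu>))"
proof -
  let ?\<psi>' = "ctransY \<epsilon> c \<mu> (\<lambda>x. ereal (\<phi> x))"
  note semi_dual = Dual_ctransY[OF pair_prob_space_axioms eps_pos cost_measurable cost_bounded
      \<phi>_measurable \<phi>_bounded]
  have [measurable]: "?\<psi>' \<in> borel_measurable \<nu>"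
    by (rule semi_dual(1))
  have "AE y in \<nu>. ?\<psi>' y = \<psi> y"
    using ctransY_shifted_\<phi>[of _ 0] by simp
  then have "Dual \<epsilon> c \<mu> \<nu> (\<lambda>x. ereal (\<phi> x)) (\<lambda>y. ereal (?\<psi>' y))
      = Dual \<epsilon> c \<mu> \<nu> (\<lambda>x. ereal (\<phi> x)) (\<lambda>y. ereal (\<psi> y))"
    and "(\<integral>y. ?\<psi>' y \<partial>\<nu>) = (\<integral>y. \<psi> y \<partial>\<nu>)"
    by (auto intro!: Dual_cong_AE pair_sigma_finite_axioms integral_cong_AE elim: eventually_mono)
  with semi_dual(3) show ?thesis
    by simp
qed

text \<open>\<open>\<phi>\<close> and \<open>\<psi>\<close> are c-transforms of each other, so they stay within 1 of the constants
  \<open>A\<close> and \<open>B\<close> below; as \<open>-B\<close> is a log-mean-exp of \<open>\<phi>\<close>, also \<open>|A + B| \<le> 1\<close>.\<close>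

lemma shifted_potentials_bounded:
  "\<exists>k. (\<forall>x\<in>space \<mu>. \<bar>\<phi> x - k\<bar> \<le> 3 / 2) \<and> (\<forall>y\<in>space \<nu>. \<bar>\<psi> y + k\<bar> \<le> 3 / 2)"
proof -
  define A where "A = - \<epsilon> * ln (enn2real (\<integral>\<^sup>+ y. exp_eps \<epsilon> (ereal (\<psi> y)) \<partial>\<nu>))"
  define B where "B = - \<epsilon> * ln (enn2real (\<integral>\<^sup>+ x. exp_eps \<epsilon> (ereal (\<phi> x)) \<partial>\<mu>))"
  have \<phi>_A: "\<bar>\<phi> x - A\<bar> \<le> 1" if "x \<in> space \<mu>" for x
    using ctransX_dist_le[where k=c and x=x, OF eps_pos Lexp_potentials(2) cost_bounded]
      ctransX_shifted_\<psi>[OF that, of 0]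
    by (simp add: A_def)
  have \<psi>_B: "\<bar>\<psi> y - B\<bar> \<le> 1" if "y \<in> space \<nu>" for y
    using ctransX_dist_le[where k="\<lambda>y x. c x y" and x=y, OF eps_pos Lexp_potentials(1) cost_bounded]
      ctransY_shifted_\<phi>[OF that, of 0]
    by (simp add: B_def ctransY_eq_ctransX)
  have "\<bar>- B - A\<bar> \<le> 1"
    using ln_mean_exp_dist_le[OF eps_pos M1.prob_space_axioms \<phi>_measurable \<phi>_A] by (simp add: B_def)
  then have "\<bar>\<phi> x - (A / 2 - B / 2)\<bar> \<le> 3 / 2" if "x \<in> space \<mu>" for x
    using \<phi>_A[OF that] by linarith
  moreover have "\<bar>\<psi> y + (A / 2 - B / 2)\<bar> \<le> 3 / 2" if "y \<in> space \<nu>" for y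
    using \<psi>_B[OF that] \<open>\<bar>- B - A\<bar> \<le> 1\<close> by linarith
  ultimately show ?thesis
    by blast
qed

end

lemma Fce_attains_OT:
  fixes c :: "'x::topological_space \<Rightarrow> 'y::topological_space \<Rightarrow> real"
  assumes "schroedinger_system \<mu> \<nu> \<epsilon> c \<phi> \<psi>"
    and sets_\<mu>: "sets \<mu> = sets borel" and sets_\<nu>: "sets \<nu> = sets borel"
  shows "\<exists>\<phi>'' \<in> Fce \<epsilon> c. OT \<epsilon> c \<mu> \<nu>
    = eint \<mu> (\<lambda>x. ereal (\<phi>'' x)) + eint \<nu> (\<lambda>y. ereal (ctransY \<epsilon> c \<mu> (\<lambda>x. ereal (\<phi>'' x)) y))"
proof -
  interpret schroedinger_system \<mu> \<nu> \<epsilon> c \<phi> \<psi> by fact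
  have space: "space \<mu> = UNIV" "space \<nu> = UNIV"
    using sets_eq_imp_space_eq[OF sets_\<mu>] sets_eq_imp_space_eq[OF sets_\<nu>] by simp_all
  obtain k where k: "\<And>x. \<bar>\<phi> x - k\<bar> \<le> 3 / 2" "\<And>y. \<bar>\<psi> y + k\<bar> \<le> 3 / 2"
    using shifted_potentials_bounded by (auto simp: space)
  show ?thesis
  proof
    have "(\<lambda>y. \<psi> y + k) \<in> borel_measurable borel"
      using \<psi>_measurable unfolding measurable_cong_sets[OF sets_\<nu> refl] by simp
    moreover have "(\<lambda>x. \<phi> x - k) = ctransX \<epsilon> c \<nu> (\<lambda>y. ereal (\<psi> y + k))"
      using ctransX_shifted_\<psi> by (auto simp: space)
    ultimately show "(\<lambda>x. \<phi> x - k) \<in> Fce \<epsilon> c"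
      unfolding Fce_def using M2.prob_space_axioms sets_\<nu> k
      by (intro CollectI exI[of _ \<nu>] exI[of _ "\<lambda>y. \<psi> y + k"] conjI allI) simp_all
    have "ctransY \<epsilon> c \<mu> (\<lambda>x. ereal (\<phi> x - k)) = (\<lambda>y. \<psi> y + k)"
      using ctransY_shifted_\<phi> by (auto simp: space)
    then show "OT \<epsilon> c \<mu> \<nu> = eint \<mu> (\<lambda>x. ereal (\<phi> x - k))
        + eint \<nu> (\<lambda>y. ereal (ctransY \<epsilon> c \<mu> (\<lambda>x. ereal (\<phi> x - k)) y))"
      using integrable_\<phi> integrable_\<psi>
      by (simp add: OT_eq_integral_potentials eint_ereal M1.prob_space M2.prob_space)
  qed
qed

lemma Fce_semi_dual_le_OT:
  fixes c :: "'x::topological_space \<Rightarrow> 'y::topological_space \<Rightarrow> real"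
  assumes "schroedinger_system \<mu> \<nu> \<epsilon> c \<phi> \<psi>"
    and sets_\<mu>: "sets \<mu> = sets borel" and sets_\<nu>: "sets \<nu> = sets borel"
    and "\<phi>'' \<in> Fce \<epsilon> c"
  shows "eint \<mu> (\<lambda>x. ereal (\<phi>'' x)) + eint \<nu> (\<lambda>y. ereal (ctransY \<epsilon> c \<mu> (\<lambda>x. ereal (\<phi>'' x)) y))
    \<le> OT \<epsilon> c \<mu> \<nu>"
proof -
  interpret schroedinger_system \<mu> \<nu> \<epsilon> c \<phi> \<psi> by fact
  obtain \<xi> \<psi>' where \<xi>: "prob_space \<xi>" "sets \<xi> = sets borel"
    and [measurable]: "\<psi>' \<in> borel_measurable borel"
    and \<phi>''_def: "\<phi>'' = ctransX \<epsilon> c \<xi> (\<lambda>y. ereal (\<psi>' y))" and \<phi>''_bound: "\<And>x. \<bar>\<phi>'' x\<bar> \<le> 3 / 2"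
    using \<open>\<phi>'' \<in> Fce \<epsilon> c\<close> unfolding Fce_def by blast
  have sets_\<mu>\<xi>: "sets (\<mu> \<Otimes>\<^sub>M \<xi>) = sets (\<mu> \<Otimes>\<^sub>M \<nu>)"
    using \<xi>(2) sets_\<nu> by (intro sets_pair_measure_cong) simp_all
  have "(\<lambda>(x, y). c x y) \<in> borel_measurable (\<mu> \<Otimes>\<^sub>M \<xi>)"
    using cost_measurable by (simp only: measurable_cong_sets[OF sets_\<mu>\<xi> refl])
  then have \<phi>''_meas: "\<phi>'' \<in> borel_measurable \<mu>"
    unfolding \<phi>''_def
    by (rule measurable_ctransX) (simp_all add: measurable_cong_sets[OF \<xi>(2) refl] \<xi>(1) prob_space_imp_sigma_finite)
  have \<phi>''_bounded: "bounded (range \<phi>'')"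
    unfolding bounded_real using \<phi>''_bound by blast
  note semi_dual = Dual_ctransY[OF pair_prob_space_axioms eps_pos cost_measurable cost_bounded
      \<phi>''_meas \<phi>''_bounded]
  have "eint \<mu> (\<lambda>x. ereal (\<phi>'' x)) + eint \<nu> (\<lambda>y. ereal (ctransY \<epsilon> c \<mu> (\<lambda>x. ereal (\<phi>'' x)) y))
      = Dual \<epsilon> c \<mu> \<nu> (\<lambda>x. ereal (\<phi>'' x)) (\<lambda>y. ereal (ctransY \<epsilon> c \<mu> (\<lambda>x. ereal (\<phi>'' x)) y))"
    using M1.integrable_bounded_range[OF \<phi>''_meas \<phi>''_bounded]
      M2.integrable_bounded_range[OF semi_dual(1,2)]
    by (simp add: semi_dual(3) eint_ereal)
  also have "\<dots> \<le> OT \<epsilon> c \<mu> \<nu>"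
    unfolding OT_eq_integral_potentials
    by (intro Dual_le_integral_potentials Lexp_of_bounded eps_pos M1.prob_space_axioms M2.prob_space_axioms
        \<phi>''_meas \<phi>''_bounded semi_dual(1,2))
  finally show ?thesis .
qed

section \<open>One Sinkhorn step\<close>

locale sinkhorn_step = pair_prob_space \<mu> \<nu>
  for \<mu> :: "'x measure" and \<nu> :: "'y measure" +
  fixes \<epsilon> :: real and c :: "'x \<Rightarrow> 'y \<Rightarrow> real" and \<psi>\<^sub>0 :: "'y \<Rightarrow> ereal"
  assumes eps_pos: "\<epsilon> > 0"
    and cost_measurable [measurable]: "(\<lambda>(x, y). c x y) \<in> borel_measurable (\<mu> \<Otimes>\<^sub>M \<nu>)"
    and cost_bounded: "\<And>x y. \<bar>c x y\<bar> \<le> 1"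
    and initial_Lexp: "\<psi>\<^sub>0 \<in> Lexp \<epsilon> \<nu>"
begin

abbreviation \<phi> :: "'x \<Rightarrow> real" where
  "\<phi> \<equiv> ctransX \<epsilon> c \<nu> \<psi>\<^sub>0"

abbreviation \<psi> :: "'y \<Rightarrow> real" where
  "\<psi> \<equiv> ctransY \<epsilon> c \<mu> (\<lambda>x. ereal (\<phi> x))"

abbreviation reweighted :: "'y measure" where
  "reweighted \<equiv> density \<nu> (\<lambda>y. \<integral>\<^sup>+ x. exp_eps \<epsilon> (ereal (\<phi> x) + \<psi>\<^sub>0 y - ereal (c x y)) \<partial>\<mu>)"

lemma initial_measurable [measurable]: "\<psi>\<^sub>0 \<in> borel_measurable \<nu>"
  using initial_Lexp by (rule Lexp_measurable)

lemma \<phi>_measurable [measurable]: "\<phi> \<in> borel_measurable \<mu>"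
  by (rule measurable_ctransX) (simp_all add: M2.sigma_finite_measure_axioms)

lemma \<phi>_bounded: "bounded (range \<phi>)"
  using initial_Lexp cost_bounded by (intro ctransX_bounded eps_pos)

lemma \<phi>_Lexp: "(\<lambda>x. ereal (\<phi> x)) \<in> Lexp \<epsilon> \<mu>"
  by (rule Lexp_of_bounded[OF eps_pos M1.prob_space_axioms \<phi>_measurable \<phi>_bounded])

lemmas \<psi>_measurable [measurable] = Dual_ctransY(1)[OF pair_prob_space_axioms eps_pos cost_measurable
    cost_bounded \<phi>_measurable \<phi>_bounded]
  and \<psi>_bounded = Dual_ctransY(2)[OF pair_prob_space_axioms eps_pos cost_measurable
    cost_bounded \<phi>_measurable \<phi>_bounded]

lemma initial_row_normalized:
  assumes "x \<in> space \<mu>"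
  shows "(\<integral>\<^sup>+ y. exp_eps \<epsilon> (ereal (\<phi> x) + \<psi>\<^sub>0 y - ereal (c x y)) \<partial>\<nu>) = 1"
  using ctransX_normalized[where k=c and x=x, OF eps_pos initial_Lexp cost_bounded] assms
  by (simp add: measurable_Pair1)

lemma reweighting_density_eq:
  assumes "y \<in> space \<nu>"
  shows "(\<integral>\<^sup>+ x. exp_eps \<epsilon> (ereal (\<phi> x) + \<psi>\<^sub>0 y - ereal (c x y)) \<partial>\<mu>)
    = exp_eps \<epsilon> (\<psi>\<^sub>0 y) * ennreal (exp (- \<psi> y / \<epsilon>))"
proof -
  have [measurable]: "(\<lambda>x. c x y) \<in> borel_measurable \<mu>"
    using assms by measurable
  have "(\<integral>\<^sup>+ x. exp_eps \<epsilon> (ereal (\<phi> x) + \<psi>\<^sub>0 y - ereal (c x y)) \<partial>\<mu>)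
      = exp_eps \<epsilon> (\<psi>\<^sub>0 y) * (\<integral>\<^sup>+ x. exp_eps \<epsilon> (ereal (\<phi> x) - ereal (c x y)) \<partial>\<mu>)"
    unfolding exp_eps_add_diff_ereal' by (simp add: nn_integral_cmult)
  also have "\<dots> = exp_eps \<epsilon> (\<psi>\<^sub>0 y) * ennreal (exp (- \<psi> y / \<epsilon>))"
    using ctransX_exp[where k="\<lambda>y x. c x y" and x=y, OF eps_pos \<phi>_Lexp cost_bounded]
    by (simp add: ctransY_eq_ctransX)
  finally show ?thesis .
qed

lemma prob_space_reweighted: "prob_space reweighted"
proof (rule prob_spaceI)
  have "emeasure reweighted (space reweighted)
      = (\<integral>\<^sup>+ x. (\<integral>\<^sup>+ y. exp_eps \<epsilon> (ereal (\<phi> x) + \<psi>\<^sub>0 y - ereal (c x y)) \<partial>\<nu>) \<partial>\<mu>)"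
    by (simp add: emeasure_density Fubini')
  also have "\<dots> = (\<integral>\<^sup>+ x. 1 \<partial>\<mu>)"
    by (intro nn_integral_cong initial_row_normalized)
  finally show "emeasure reweighted (space reweighted) = 1"
    by (simp add: M1.emeasure_space_1)
qed

lemma reweighted_row_normalized:
  assumes x: "x \<in> space \<mu>"
  shows "(\<integral>\<^sup>+ y. ennreal (exp ((\<phi> x + \<psi> y - c x y) / \<epsilon>)) \<partial>reweighted) = 1"
proof -
  have "(\<integral>\<^sup>+ y. ennreal (exp ((\<phi> x + \<psi> y - c x y) / \<epsilon>)) \<partial>reweighted)
      = (\<integral>\<^sup>+ y. (\<integral>\<^sup>+ x'. exp_eps \<epsilon> (ereal (\<phi> x') + \<psi>\<^sub>0 y - ereal (c x' y)) \<partial>\<mu>)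
               * ennreal (exp ((\<phi> x + \<psi> y - c x y) / \<epsilon>)) \<partial>\<nu>)"
    using x by (intro nn_integral_density) measurable
  also have "\<dots> = (\<integral>\<^sup>+ y. exp_eps \<epsilon> (ereal (\<phi> x) + \<psi>\<^sub>0 y - ereal (c x y)) \<partial>\<nu>)"
  proof (intro nn_integral_cong)
    fix y assume y: "y \<in> space \<nu>"
    have "- \<psi> y / \<epsilon> + (\<phi> x + \<psi> y - c x y) / \<epsilon> = (- \<psi> y + (\<phi> x + \<psi> y - c x y)) / \<epsilon>"
      by (rule add_divide_distrib[symmetric])
    also have "\<dots> = (\<phi> x - c x y) / \<epsilon>"
      by simp
    finally have "ennreal (exp (- \<psi> y / \<epsilon>)) * ennreal (exp ((\<phi> x + \<psi> y - c x y) / \<epsilon>))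
        = ennreal (exp ((\<phi> x - c x y) / \<epsilon>))"
      by (simp only: ennreal_exp_add[symmetric])
    then show "(\<integral>\<^sup>+ x'. exp_eps \<epsilon> (ereal (\<phi> x') + \<psi>\<^sub>0 y - ereal (c x' y)) \<partial>\<mu>)
          * ennreal (exp ((\<phi> x + \<psi> y - c x y) / \<epsilon>))
        = exp_eps \<epsilon> (ereal (\<phi> x) + \<psi>\<^sub>0 y - ereal (c x y))"
      unfolding reweighting_density_eq[OF y] by (simp only: exp_eps_add_diff_ereal' mult.assoc)
  qed
  also have "\<dots> = 1"
    using x by (rule initial_row_normalized)
  finally show ?thesis .
qed

lemma column_normalized:
  assumes "y \<in> space \<nu>"
  shows "(\<integral>\<^sup>+ x. ennreal (exp ((\<phi> x + \<psi> y - c x y) / \<epsilon>)) \<partial>\<mu>) = 1"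
  using ctransY_normalized[where c=c and y=y, OF eps_pos \<phi>_Lexp cost_bounded] assms
  by (simp add: measurable_Pair2)

lemma schroedinger_system: "schroedinger_system \<mu> reweighted \<epsilon> c \<phi> \<psi>"
proof -
  have sets_reweighted: "sets reweighted = sets \<nu>"
    by simp
  have "pair_prob_space \<mu> reweighted"
    using prob_space_reweighted
    by (simp add: pair_prob_space_def pair_sigma_finite_def M1.prob_space_axioms
        M1.sigma_finite_measure_axioms prob_space_imp_sigma_finite)
  then show ?thesis
    using eps_pos cost_bounded \<phi>_bounded \<psi>_bounded reweighted_row_normalized column_normalized
    by (intro schroedinger_system.intro schroedinger_system_axioms.intro)
      (simp_all add: measurable_cong_sets[OF sets_pair_measure_cong[OF refl sets_reweighted] refl]
        measurable_cong_sets[OF sets_reweighted refl])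
qed

end

theorem mainTheorem16:
  fixes c :: "'x::polish_space \<Rightarrow> 'y::polish_space \<Rightarrow> real"
    and \<epsilon> :: real
    and \<mu> :: "'x measure" and \<nu> :: "'y measure"
    and \<psi>\<^sub>0 :: "'y \<Rightarrow> ereal"
  assumes c_meas: "(\<lambda>(x, y). c x y) \<in> borel_measurable (borel \<Otimes>\<^sub>M borel)"
    and c_bdd: "\<And>x y. \<bar>c x y\<bar> \<le> 1"
    and eps_pos: "\<epsilon> > 0"
    and mu: "prob_space \<mu>" "sets \<mu> = sets (borel :: 'x measure)"
    and nu: "prob_space \<nu>" "sets \<nu> = sets (borel :: 'y measure)"
    and psi0: "\<psi>\<^sub>0 \<in> Lexp \<epsilon> \<nu>"
  shows "let \<phi> = ctransX \<epsilon> c \<nu> \<psi>\<^sub>0;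
             \<psi> = ctransY \<epsilon> c \<mu> (\<lambda>x. ereal (\<phi> x));
             \<nu>' = density \<nu> (\<lambda>y. \<integral>\<^sup>+ x. exp_eps \<epsilon> (ereal (\<phi> x) + \<psi>\<^sub>0 y - ereal (c x y)) \<partial>\<mu>)
         in prob_space \<nu>'
            \<and> (\<lambda>x. ereal (\<phi> x)) \<in> Lexp \<epsilon> \<mu>
            \<and> (\<lambda>y. ereal (\<psi> y)) \<in> Lexp \<epsilon> \<nu>'
            \<and> (\<forall>\<phi>' \<in> Lexp \<epsilon> \<mu>. \<forall>\<psi>' \<in> Lexp \<epsilon> \<nu>'.
                 Dual \<epsilon> c \<mu> \<nu>' \<phi>' \<psi>' \<le> Dual \<epsilon> c \<mu> \<nu>' (\<lambda>x. ereal (\<phi> x)) (\<lambda>y. ereal (\<psi> y)))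
            \<and> OT \<epsilon> c \<mu> \<nu>' = eint \<mu> (\<lambda>x. ereal (\<phi> x)) + eint \<nu>' (\<lambda>y. ereal (\<psi> y))
            \<and> (\<exists>\<phi>'' \<in> Fce \<epsilon> c. OT \<epsilon> c \<mu> \<nu>' =
                  eint \<mu> (\<lambda>x. ereal (\<phi>'' x)) + eint \<nu>' (\<lambda>y. ereal (ctransY \<epsilon> c \<mu> (\<lambda>x. ereal (\<phi>'' x)) y)))
            \<and> (\<forall>\<phi>'' \<in> Fce \<epsilon> c.
                  eint \<mu> (\<lambda>x. ereal (\<phi>'' x)) + eint \<nu>' (\<lambda>y. ereal (ctransY \<epsilon> c \<mu> (\<lambda>x. ereal (\<phi>'' x)) y))
                  \<le> OT \<epsilon> c \<mu> \<nu>')"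
proof -
  have "pair_prob_space \<mu> \<nu>"
    using mu(1) nu(1) by (simp add: pair_prob_space_def pair_sigma_finite_def prob_space_imp_sigma_finite)
  moreover have "(\<lambda>(x, y). c x y) \<in> borel_measurable (\<mu> \<Otimes>\<^sub>M \<nu>)"
    using c_meas by (simp add: measurable_cong_sets[OF sets_pair_measure_cong[OF mu(2) nu(2)] refl])
  ultimately interpret S: sinkhorn_step \<mu> \<nu> \<epsilon> c \<psi>\<^sub>0
    using eps_pos c_bdd psi0 by (simp add: sinkhorn_step_def sinkhorn_step_axioms_def)
  interpret schroedinger_system \<mu> S.reweighted \<epsilon> c S.\<phi> S.\<psi>
    by (rule S.schroedinger_system)
  have "sets S.reweighted = sets borel"
    using nu(2) by simp
  note Fce = Fce_attains_OT[OF schroedinger_system_axioms mu(2) this]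
    Fce_semi_dual_le_OT[OF schroedinger_system_axioms mu(2) this]
  show ?thesis
    unfolding Let_def Dual_potentials_eq OT_eq_integral_potentials eint_potentials
    using M2.prob_space_axioms Lexp_potentials Dual_le_integral_potentials Fce[unfolded OT_eq_integral_potentials]
    by blast
qed

end
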